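(* Let $\rho_{00}$ be a probability density on $\mathbb{R}^n$ and, for $T\colon[0,1]^2\times\mathbb{R}^n\to\mathbb{R}^n$, let $$D(s,t,T)=\Big(\int \|\partial_s T(s,t,x)\|^2\rho_{00}(x)dx\cdot \int\|\partial_t T(s,t,x)\|^2\rho_{00}(x) dx-\Big(\int \partial_s T(s,t,x)\cdot \partial_t T(s,t,x) \rho_{00}(x)dx\Big)^2 \Big)^{1/2}.$$ The Euler–Lagrange equation of the variational problem $\inf_T\int_0^1\int_0^1 D(s,t,T)\,ds\,dt$, with fixed boundary conditions $T(0,t,\cdot)_\#\rho_{00}=\rho_{0t}$, $T(1,t,\cdot)_\#\rho_{00}=\rho_{1t}$, $T(s,0,\cdot)_\#\rho_{00}=\rho_{s0}$, $T(s,1,\cdot)_\#\rho_{00}=\rho_{s1}$, is the second-order PDE $$\partial_{s}\Big(\partial_sT\, D^{-1}\int \|\partial_tT\|^2\rho_{00}dx\Big)+ \partial_{t}\Big(\partial_tT\, D^{-1} \int \|\partial_sT\|^2\rho_{00}dx\Big)-\partial_t\Big( \partial_{s}T\, D^{-1}\int \partial_s T\cdot\partial_tT\rho_{00}dx \Big)-\partial_s\Big( \partial_{t}T\, D^{-1}\int \partial_s T\cdot\partial_tT\rho_{00}dx \Big) =0,$$ where $D=D(s,t,T)$, with the same boundary conditions.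
   Context: All integrals are over $\mathbb{R}^n$; $T_\#\mu$ denotes pushforward; $\rho_{st}$, $s,t\in[0,1]$, are prescribed boundary densities forming Wasserstein-2 geodesics along the four edges of $[0,1]^2$. The Euler–Lagrange equation is obtained from vanishing first variation against smooth test maps $\delta T$ vanishing on the four boundary edges. *)

theory Defs
  imports "HOL-Analysis.Analysis"
begin

text \<open>Maps T : [0,1]^2 x R^n -> R^n are modelled as functions
  real => real => 'a => 'a with 'a a Euclidean space (R^n).
  Partial derivatives in s and t are carried as explicit functions,
  tied to T by the predicate C1_param.\<close>

definition unit_sq :: "(real \<times> real) set" where
  "unit_sq = {0..1} \<times> {0..1}"

definition wint :: "('a::euclidean_space \<Rightarrow> real) \<Rightarrow> ('a \<Rightarrow> real) \<Rightarrow> real" where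
  "wint \<rho> f = (LINT x|lborel. f x * \<rho> x)"

text \<open>D(s,t,T), with P = partial_s T and Q = partial_t T.\<close>
definition Dfun :: "('a::euclidean_space \<Rightarrow> real) \<Rightarrow> (real \<Rightarrow> real \<Rightarrow> 'a \<Rightarrow> 'a)
    \<Rightarrow> (real \<Rightarrow> real \<Rightarrow> 'a \<Rightarrow> 'a) \<Rightarrow> real \<Rightarrow> real \<Rightarrow> real" where
  "Dfun \<rho> P Q s t =
     sqrt (wint \<rho> (\<lambda>x. (norm (P s t x))\<^sup>2) * wint \<rho> (\<lambda>x. (norm (Q s t x))\<^sup>2)
           - (wint \<rho> (\<lambda>x. P s t x \<bullet> Q s t x))\<^sup>2)"

definition action :: "('a::euclidean_space \<Rightarrow> real) \<Rightarrow> (real \<Rightarrow> real \<Rightarrow> 'a \<Rightarrow> 'a)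
    \<Rightarrow> (real \<Rightarrow> real \<Rightarrow> 'a \<Rightarrow> 'a) \<Rightarrow> real" where
  "action \<rho> P Q = integral {0..1} (\<lambda>s. integral {0..1} (\<lambda>t. Dfun \<rho> P Q s t))"

definition C1_param :: "(real \<Rightarrow> real \<Rightarrow> 'a \<Rightarrow> 'b::real_normed_vector)
    \<Rightarrow> (real \<Rightarrow> real \<Rightarrow> 'a \<Rightarrow> 'b) \<Rightarrow> (real \<Rightarrow> real \<Rightarrow> 'a \<Rightarrow> 'b) \<Rightarrow> bool" where
  "C1_param F Fs Ft \<longleftrightarrow>
     (\<forall>x. (\<forall>p\<in>unit_sq.
            ((\<lambda>q. F (fst q) (snd q) x) has_derivative
               (\<lambda>h. fst h *\<^sub>R Fs (fst p) (snd p) x + snd h *\<^sub>R Ft (fst p) (snd p) x))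
            (at p within unit_sq))
        \<and> continuous_on unit_sq (\<lambda>q. Fs (fst q) (snd q) x)
        \<and> continuous_on unit_sq (\<lambda>q. Ft (fst q) (snd q) x))"

definition L2_dominated :: "('a::euclidean_space \<Rightarrow> real) \<Rightarrow> (real \<Rightarrow> real \<Rightarrow> 'a \<Rightarrow> 'a) list \<Rightarrow> bool" where
  "L2_dominated \<rho> Fs \<longleftrightarrow>
     (\<forall>F\<in>set Fs. \<forall>p\<in>unit_sq. F (fst p) (snd p) \<in> borel_measurable lborel) \<and>
     (\<exists>g. g \<in> borel_measurable lborel \<and> integrable lborel (\<lambda>x. (g x)\<^sup>2 * \<rho> x) \<and>
          (\<forall>F\<in>set Fs. \<forall>p\<in>unit_sq. \<forall>x. norm (F (fst p) (snd p) x) \<le> g x))"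

definition test_map :: "('a::euclidean_space \<Rightarrow> real) \<Rightarrow> (real \<Rightarrow> real \<Rightarrow> 'a \<Rightarrow> 'a)
    \<Rightarrow> (real \<Rightarrow> real \<Rightarrow> 'a \<Rightarrow> 'a) \<Rightarrow> (real \<Rightarrow> real \<Rightarrow> 'a \<Rightarrow> 'a) \<Rightarrow> bool" where
  "test_map \<rho> V Vs Vt \<longleftrightarrow>
     C1_param V Vs Vt \<and>
     (\<forall>r\<in>{0..1}. \<forall>x. V 0 r x = 0 \<and> V 1 r x = 0 \<and> V r 0 x = 0 \<and> V r 1 x = 0) \<and>
     L2_dominated \<rho> [V, Vs, Vt]"

text \<open>Vanishing first variation: for every admissible delta T, the derivative
  of epsilon |-> J(T + epsilon delta T) at epsilon = 0 exists and is 0.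
  Note partial_s (T + eps V) = Ts + eps Vs, etc.\<close>
definition stationary :: "('a::euclidean_space \<Rightarrow> real) \<Rightarrow> (real \<Rightarrow> real \<Rightarrow> 'a \<Rightarrow> 'a)
    \<Rightarrow> (real \<Rightarrow> real \<Rightarrow> 'a \<Rightarrow> 'a) \<Rightarrow> bool" where
  "stationary \<rho> Ts Tt \<longleftrightarrow>
     (\<forall>V Vs Vt. test_map \<rho> V Vs Vt \<longrightarrow>
        ((\<lambda>\<epsilon>. action \<rho> (\<lambda>s t x. Ts s t x + \<epsilon> *\<^sub>R Vs s t x)
                           (\<lambda>s t x. Tt s t x + \<epsilon> *\<^sub>R Vt s t x)) has_real_derivative 0) (at 0))"

definition EL_lhs :: "('a::euclidean_space \<Rightarrow> real) \<Rightarrow> (real \<Rightarrow> real \<Rightarrow> 'a \<Rightarrow> 'a)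
    \<Rightarrow> (real \<Rightarrow> real \<Rightarrow> 'a \<Rightarrow> 'a) \<Rightarrow> real \<Rightarrow> real \<Rightarrow> 'a \<Rightarrow> 'a" where
  "EL_lhs \<rho> Ts Tt s t x =
      vector_derivative (\<lambda>\<sigma>. (wint \<rho> (\<lambda>y. (norm (Tt \<sigma> t y))\<^sup>2) / Dfun \<rho> Ts Tt \<sigma> t) *\<^sub>R Ts \<sigma> t x) (at s)
    + vector_derivative (\<lambda>\<tau>. (wint \<rho> (\<lambda>y. (norm (Ts s \<tau> y))\<^sup>2) / Dfun \<rho> Ts Tt s \<tau>) *\<^sub>R Tt s \<tau> x) (at t)
    - vector_derivative (\<lambda>\<tau>. (wint \<rho> (\<lambda>y. Ts s \<tau> y \<bullet> Tt s \<tau> y) / Dfun \<rho> Ts Tt s \<tau>) *\<^sub>R Ts s \<tau> x) (at t)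
    - vector_derivative (\<lambda>\<sigma>. (wint \<rho> (\<lambda>y. Ts \<sigma> t y \<bullet> Tt \<sigma> t y) / Dfun \<rho> Ts Tt \<sigma> t) *\<^sub>R Tt \<sigma> t x) (at s)"

end

theory Submission
  imports Defs
begin

(*
  Write <.,.> for the inner product of L2(rho) and A, B, C for the Gram entries <T_s, T_s>,
  <T_t, T_t>, <T_s, T_t>, so that D = sqrt (A B - C^2) > 0 on the closed square. Along T + e V
  the integrand of the action is the square root of a polynomial in e whose coefficients are
  continuous in (s, t); differentiating under both integral signs gives the first variation
    int int (B <T_s, V_s> + A <T_t, V_t> - C (<T_s, V_t> + <T_t, V_s>)) / D ds dt.
  Integrating by parts in s and in t, without boundary terms since V vanishes on the edges, turns
  this into - int int <V, EL> ds dt, where EL is the left-hand side of the Euler-Lagrange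
  equation. Hence EL = 0 implies stationarity. Conversely, testing stationarity with
  V = phi(s) psi(t) W(x) for C^1 bumps phi, psi and W = E / (1 + |E|), E = EL(s0, t0, .), the
  fundamental lemma of the calculus of variations yields int |E|^2 / (1 + |E|) rho dx = 0.
*)

section \<open>Parameter-dependent weighted integrals\<close>

lemma has_real_derivative_inner:
  fixes F G :: "real \<Rightarrow> 'a::real_inner"
  assumes "(F has_vector_derivative F') (at y within S)"
    and "(G has_vector_derivative G') (at y within S)"
  shows "((\<lambda>y. F y \<bullet> G y) has_real_derivative (F' \<bullet> G y + F y \<bullet> G')) (at y within S)"
proof -
  have "((\<lambda>y. F y \<bullet> G y) has_derivative (\<lambda>h. F y \<bullet> (h *\<^sub>R G') + (h *\<^sub>R F') \<bullet> G y)) (at y within S)"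
    using assms unfolding has_vector_derivative_def by (intro has_derivative_inner)
  then show ?thesis unfolding has_field_derivative_def
    by (rule has_derivative_eq_rhs) (auto simp: algebra_simps fun_eq_iff)
qed

lemma abs_inner_le_square:
  fixes a b :: "'a::real_inner"
  assumes "norm a \<le> c" "norm b \<le> c"
  shows "\<bar>a \<bullet> b\<bar> \<le> c\<^sup>2"
proof -
  have "\<bar>a \<bullet> b\<bar> \<le> norm a * norm b" by (rule Cauchy_Schwarz_ineq2)
  also have "\<dots> \<le> c * c" using assms by (intro mult_mono) (auto intro: order_trans[OF norm_ge_zero])
  finally show ?thesis by (simp add: power2_eq_square)
qed

lemma norm_weighted_inner_le:
  fixes a b :: "'a::real_inner"
  assumes "norm a \<le> c" "norm b \<le> c" "w \<ge> 0"
  shows "norm ((a \<bullet> b) * w) \<le> c\<^sup>2 * w"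
  using mult_right_mono[OF abs_inner_le_square[OF assms(1,2)] assms(3)] assms(3) by (simp add: abs_mult)

lemma integrable_weighted_inner:
  fixes F G :: "'a::euclidean_space \<Rightarrow> 'a" and \<rho> g :: "'a \<Rightarrow> real"
  assumes "\<rho> \<in> borel_measurable lborel" "\<And>x. \<rho> x \<ge> 0"
    and "integrable lborel (\<lambda>x. (g x)\<^sup>2 * \<rho> x)"
    and "F \<in> borel_measurable lborel" "G \<in> borel_measurable lborel"
    and "\<And>x. norm (F x) \<le> g x" "\<And>x. norm (G x) \<le> g x"
  shows "integrable lborel (\<lambda>x. (F x \<bullet> G x) * \<rho> x)"
proof (rule Bochner_Integration.integrable_bound[OF assms(3)])
  show "(\<lambda>x. (F x \<bullet> G x) * \<rho> x) \<in> borel_measurable lborel"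
    using assms by measurable
  show "AE x in lborel. norm ((F x \<bullet> G x) * \<rho> x) \<le> norm ((g x)\<^sup>2 * \<rho> x)"
    using norm_weighted_inner_le[OF assms(6,7) assms(2)] assms(2) by (intro AE_I2) (simp add: abs_mult)
qed

lemma continuous_on_weighted_inner_integral:
  fixes F G :: "'p::metric_space \<Rightarrow> 'a::euclidean_space \<Rightarrow> 'a" and \<rho> g :: "'a \<Rightarrow> real"
  assumes \<rho>: "\<rho> \<in> borel_measurable lborel" "\<And>x. \<rho> x \<ge> 0"
    and g: "integrable lborel (\<lambda>x. (g x)\<^sup>2 * \<rho> x)"
    and meas: "\<And>p. p \<in> S \<Longrightarrow> F p \<in> borel_measurable lborel" "\<And>p. p \<in> S \<Longrightarrow> G p \<in> borel_measurable lborel"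
    and bound: "\<And>p x. p \<in> S \<Longrightarrow> norm (F p x) \<le> g x" "\<And>p x. p \<in> S \<Longrightarrow> norm (G p x) \<le> g x"
    and cont: "\<And>x. continuous_on S (\<lambda>p. F p x)" "\<And>x. continuous_on S (\<lambda>p. G p x)"
  shows "continuous_on S (\<lambda>p. LINT x|lborel. (F p x \<bullet> G p x) * \<rho> x)"
proof (rule continuous_on_sequentiallyI)
  fix u a assume u: "\<forall>n. u n \<in> S" and a: "a \<in> S" and ua: "u \<longlonglongrightarrow> a"
  show "(\<lambda>n. LINT x|lborel. (F (u n) x \<bullet> G (u n) x) * \<rho> x) \<longlonglongrightarrow> (LINT x|lborel. (F a x \<bullet> G a x) * \<rho> x)"
  proof (rule integral_dominated_convergence[OF _ _ g])
    show "(\<lambda>x. (F a x \<bullet> G a x) * \<rho> x) \<in> borel_measurable lborel"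
      using meas[OF a] \<rho> by measurable
    show "(\<lambda>x. (F (u n) x \<bullet> G (u n) x) * \<rho> x) \<in> borel_measurable lborel" for n
      using meas[OF u[rule_format]] \<rho> by measurable
    show "AE x in lborel. (\<lambda>n. (F (u n) x \<bullet> G (u n) x) * \<rho> x) \<longlonglongrightarrow> (F a x \<bullet> G a x) * \<rho> x"
    proof (intro AE_I2 tendsto_intros)
      fix x
      show "(\<lambda>n. F (u n) x) \<longlonglongrightarrow> F a x" "(\<lambda>n. G (u n) x) \<longlonglongrightarrow> G a x"
        using cont[of x] u a ua unfolding continuous_on_sequentially comp_def by auto
    qed
    show "AE x in lborel. norm ((F (u n) x \<bullet> G (u n) x) * \<rho> x) \<le> (g x)\<^sup>2 * \<rho> x" for n
      by (intro AE_I2 norm_weighted_inner_le bound u[rule_format] \<rho>(2))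
  qed
qed

lemma has_real_derivative_integral_param:
  fixes f f' :: "real \<Rightarrow> 'a \<Rightarrow> real"
  assumes S: "convex S" "\<sigma> \<in> S"
    and int: "\<And>y. y \<in> S \<Longrightarrow> integrable M (f y)"
    and meas: "f' \<sigma> \<in> borel_measurable M"
    and deriv: "\<And>x y. y \<in> S \<Longrightarrow> ((\<lambda>y. f y x) has_real_derivative f' y x) (at y within S)"
    and bound: "\<And>x y. y \<in> S \<Longrightarrow> \<bar>f' y x\<bar> \<le> w x"
    and w: "integrable M w"
  shows "((\<lambda>y. LINT x|M. f y x) has_real_derivative (LINT x|M. f' \<sigma> x)) (at \<sigma> within S)"
  unfolding has_field_derivative_iff tendsto_at_iff_sequentially
proof (intro allI impI)
  fix X :: "nat \<Rightarrow> real" assume X: "\<forall>i. X i \<in> S - {\<sigma>}" and X_lim: "X \<longlonglongrightarrow> \<sigma>"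
  define q where "q i x = (f (X i) x - f \<sigma> x) / (X i - \<sigma>)" for i x
  have quotient: "((LINT x|M. f (X i) x) - (LINT x|M. f \<sigma> x)) / (X i - \<sigma>) = (LINT x|M. q i x)" for i
  proof -
    have "X i \<in> S" using X by auto
    then show ?thesis
      unfolding q_def integral_divide_zero
      using Bochner_Integration.integral_diff[OF int int[OF S(2)]] by simp
  qed
  have "(\<lambda>i. LINT x|M. q i x) \<longlonglongrightarrow> (LINT x|M. f' \<sigma> x)"
  proof (rule integral_dominated_convergence[OF meas _ w])
    show "q i \<in> borel_measurable M" for i
      unfolding q_def using int X S(2) by (intro borel_measurable_divide borel_measurable_diff) auto
    show "AE x in M. (\<lambda>i. q i x) \<longlonglongrightarrow> f' \<sigma> x"
    proof (intro AE_I2)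
      fix x
      have "((\<lambda>y. (f y x - f \<sigma> x) / (y - \<sigma>)) \<longlongrightarrow> f' \<sigma> x) (at \<sigma> within S)"
        using deriv[OF S(2)] unfolding has_field_derivative_iff .
      then show "(\<lambda>i. q i x) \<longlonglongrightarrow> f' \<sigma> x"
        using X X_lim unfolding tendsto_at_iff_sequentially q_def comp_def by blast
    qed
    show "AE x in M. norm (q i x) \<le> w x" for i
    proof (intro AE_I2)
      fix x
      have "norm (f (X i) x - f \<sigma> x) \<le> w x * norm (X i - \<sigma>)"
        by (rule field_differentiable_bound[OF S(1), where f = "\<lambda>y. f y x" and f' = "\<lambda>y. f' y x"])
          (use deriv bound X S(2) in auto)
      moreover have "X i \<noteq> \<sigma>" using X by auto
      ultimately show "norm (q i x) \<le> w x"
        by (simp add: q_def abs_divide divide_le_eq)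
    qed
  qed
  then show "((\<lambda>y. ((LINT x|M. f y x) - (LINT x|M. f \<sigma> x)) / (y - \<sigma>)) \<circ> X) \<longlonglongrightarrow> (LINT x|M. f' \<sigma> x)"
    unfolding comp_def quotient .
qed

lemma has_real_derivative_weighted_inner_integral:
  fixes F G F' G' :: "real \<Rightarrow> 'a::euclidean_space \<Rightarrow> 'a" and \<rho> g :: "'a \<Rightarrow> real"
  assumes \<rho>: "\<rho> \<in> borel_measurable lborel" "\<And>x. \<rho> x \<ge> 0"
    and g: "integrable lborel (\<lambda>x. (g x)\<^sup>2 * \<rho> x)"
    and S: "convex S" "\<sigma> \<in> S"
    and meas: "\<And>y. y \<in> S \<Longrightarrow> F y \<in> borel_measurable lborel" "\<And>y. y \<in> S \<Longrightarrow> G y \<in> borel_measurable lborel"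
      "\<And>y. y \<in> S \<Longrightarrow> F' y \<in> borel_measurable lborel" "\<And>y. y \<in> S \<Longrightarrow> G' y \<in> borel_measurable lborel"
    and bound: "\<And>y x. y \<in> S \<Longrightarrow> norm (F y x) \<le> g x" "\<And>y x. y \<in> S \<Longrightarrow> norm (G y x) \<le> g x"
      "\<And>y x. y \<in> S \<Longrightarrow> norm (F' y x) \<le> g x" "\<And>y x. y \<in> S \<Longrightarrow> norm (G' y x) \<le> g x"
    and deriv: "\<And>y x. y \<in> S \<Longrightarrow> ((\<lambda>y. F y x) has_vector_derivative F' y x) (at y within S)"
      "\<And>y x. y \<in> S \<Longrightarrow> ((\<lambda>y. G y x) has_vector_derivative G' y x) (at y within S)"
  shows "((\<lambda>y. LINT x|lborel. (F y x \<bullet> G y x) * \<rho> x) has_real_derivative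
           (LINT x|lborel. (F' \<sigma> x \<bullet> G \<sigma> x) * \<rho> x) + (LINT x|lborel. (F \<sigma> x \<bullet> G' \<sigma> x) * \<rho> x))
         (at \<sigma> within S)"
proof -
  have int: "integrable lborel (\<lambda>x. (H y x \<bullet> K y x) * \<rho> x)"
    if "H \<in> {F, G, F', G'}" "K \<in> {F, G, F', G'}" "y \<in> S" for H K y
    by (rule integrable_weighted_inner[OF \<rho> g]) (use that meas bound in auto)
  have "((\<lambda>y. LINT x|lborel. (F y x \<bullet> G y x) * \<rho> x) has_real_derivative
          (LINT x|lborel. (F' \<sigma> x \<bullet> G \<sigma> x + F \<sigma> x \<bullet> G' \<sigma> x) * \<rho> x)) (at \<sigma> within S)"
  proof (rule has_real_derivative_integral_param[OF S, where w = "\<lambda>x. 2 * ((g x)\<^sup>2 * \<rho> x)"])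
    show "(\<lambda>x. (F' \<sigma> x \<bullet> G \<sigma> x + F \<sigma> x \<bullet> G' \<sigma> x) * \<rho> x) \<in> borel_measurable lborel"
      using meas[OF S(2)] \<rho>(1) by measurable
    show "((\<lambda>y. (F y x \<bullet> G y x) * \<rho> x) has_real_derivative (F' y x \<bullet> G y x + F y x \<bullet> G' y x) * \<rho> x)
        (at y within S)" if "y \<in> S" for x y
      using has_real_derivative_inner[OF deriv[OF that]] by (rule DERIV_cmult_right)
    show "\<bar>(F' y x \<bullet> G y x + F y x \<bullet> G' y x) * \<rho> x\<bar> \<le> 2 * ((g x)\<^sup>2 * \<rho> x)" if "y \<in> S" for x y
    proof -
      have "\<bar>F' y x \<bullet> G y x\<bar> \<le> (g x)\<^sup>2" "\<bar>F y x \<bullet> G' y x\<bar> \<le> (g x)\<^sup>2"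
        using abs_inner_le_square bound that by blast+
      then have "\<bar>F' y x \<bullet> G y x + F y x \<bullet> G' y x\<bar> \<le> 2 * (g x)\<^sup>2" by linarith
      from mult_right_mono[OF this \<rho>(2)[of x]] show ?thesis
        using \<rho>(2)[of x] by (simp add: abs_mult mult.assoc)
    qed
  qed (use int g in auto)
  then show ?thesis
    using int S(2) by (simp add: distrib_right)
qed

section \<open>Dominated and \<open>C\<^sup>1\<close> families of maps\<close>

lemma L2_dominated_subset:
  "L2_dominated \<rho> Gs \<Longrightarrow> set Fs \<subseteq> set Gs \<Longrightarrow> L2_dominated \<rho> Fs"
  unfolding L2_dominated_def by blast

lemma L2_dominatedE:
  assumes "L2_dominated \<rho> Fs"
  obtains g where "g \<in> borel_measurable lborel" "integrable lborel (\<lambda>x. (g x)\<^sup>2 * \<rho> x)"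
    and "\<And>F s t. F \<in> set Fs \<Longrightarrow> s \<in> {0..1::real} \<Longrightarrow> t \<in> {0..1::real} \<Longrightarrow> F s t \<in> borel_measurable lborel"
    and "\<And>F s t x. F \<in> set Fs \<Longrightarrow> s \<in> {0..1::real} \<Longrightarrow> t \<in> {0..1::real} \<Longrightarrow> norm (F s t x) \<le> g x"
proof -
  from assms obtain g where g: "g \<in> borel_measurable lborel" "integrable lborel (\<lambda>x. (g x)\<^sup>2 * \<rho> x)"
    and meas: "\<forall>F\<in>set Fs. \<forall>p\<in>unit_sq. F (fst p) (snd p) \<in> borel_measurable lborel"
    and bound: "\<forall>F\<in>set Fs. \<forall>p\<in>unit_sq. \<forall>x. norm (F (fst p) (snd p) x) \<le> g x"
    unfolding L2_dominated_def by blast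
  show ?thesis
  proof (rule that[OF g])
    fix F and s t :: real assume "F \<in> set Fs" "s \<in> {0..1}" "t \<in> {0..1}"
    then show "F s t \<in> borel_measurable lborel"
      using meas[rule_format, of F "(s, t)"] by (simp add: unit_sq_def)
  next
    fix F x and s t :: real assume "F \<in> set Fs" "s \<in> {0..1}" "t \<in> {0..1}"
    then show "norm (F s t x) \<le> g x"
      using bound[rule_format, of F "(s, t)" x] by (simp add: unit_sq_def)
  qed
qed

lemma integrable_square_sum_abs:
  fixes \<rho> g h :: "'a::euclidean_space \<Rightarrow> real"
  assumes "\<rho> \<in> borel_measurable lborel" "\<And>x. \<rho> x \<ge> 0"
    and "g \<in> borel_measurable lborel" "h \<in> borel_measurable lborel"
    and "integrable lborel (\<lambda>x. (g x)\<^sup>2 * \<rho> x)" "integrable lborel (\<lambda>x. (h x)\<^sup>2 * \<rho> x)"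
  shows "integrable lborel (\<lambda>x. (\<bar>g x\<bar> + \<bar>h x\<bar>)\<^sup>2 * \<rho> x)"
proof (rule Bochner_Integration.integrable_bound[where f = "\<lambda>x. 2 * ((g x)\<^sup>2 * \<rho> x) + 2 * ((h x)\<^sup>2 * \<rho> x)"])
  show "integrable lborel (\<lambda>x. 2 * ((g x)\<^sup>2 * \<rho> x) + 2 * ((h x)\<^sup>2 * \<rho> x))"
    using assms by auto
  show "(\<lambda>x. (\<bar>g x\<bar> + \<bar>h x\<bar>)\<^sup>2 * \<rho> x) \<in> borel_measurable lborel"
    using assms by measurable
  show "AE x in lborel. norm ((\<bar>g x\<bar> + \<bar>h x\<bar>)\<^sup>2 * \<rho> x) \<le> norm (2 * ((g x)\<^sup>2 * \<rho> x) + 2 * ((h x)\<^sup>2 * \<rho> x))"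
  proof (intro AE_I2)
    fix x
    have "(\<bar>g x\<bar> + \<bar>h x\<bar>)\<^sup>2 \<le> 2 * (g x)\<^sup>2 + 2 * (h x)\<^sup>2"
      using zero_le_power2[of "\<bar>g x\<bar> - \<bar>h x\<bar>"] by (simp add: power2_sum power2_diff)
    from mult_right_mono[OF this assms(2)]
    show "norm ((\<bar>g x\<bar> + \<bar>h x\<bar>)\<^sup>2 * \<rho> x) \<le> norm (2 * ((g x)\<^sup>2 * \<rho> x) + 2 * ((h x)\<^sup>2 * \<rho> x))"
      using assms(2)[of x] by (simp add: algebra_simps)
  qed
qed

lemma L2_dominated_append:
  assumes \<rho>: "\<rho> \<in> borel_measurable lborel" "\<And>x. \<rho> x \<ge> 0"
    and "L2_dominated \<rho> Fs" "L2_dominated \<rho> Gs"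
  shows "L2_dominated \<rho> (Fs @ Gs)"
proof -
  obtain g where g: "g \<in> borel_measurable lborel" "integrable lborel (\<lambda>x. (g x)\<^sup>2 * \<rho> x)"
    and Fs: "\<And>F p. F \<in> set Fs \<Longrightarrow> p \<in> unit_sq \<Longrightarrow> F (fst p) (snd p) \<in> borel_measurable lborel"
      "\<And>F p x. F \<in> set Fs \<Longrightarrow> p \<in> unit_sq \<Longrightarrow> norm (F (fst p) (snd p) x) \<le> g x"
    using assms(3) unfolding L2_dominated_def by blast
  obtain h where h: "h \<in> borel_measurable lborel" "integrable lborel (\<lambda>x. (h x)\<^sup>2 * \<rho> x)"
    and Gs: "\<And>G p. G \<in> set Gs \<Longrightarrow> p \<in> unit_sq \<Longrightarrow> G (fst p) (snd p) \<in> borel_measurable lborel"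
      "\<And>G p x. G \<in> set Gs \<Longrightarrow> p \<in> unit_sq \<Longrightarrow> norm (G (fst p) (snd p) x) \<le> h x"
    using assms(4) unfolding L2_dominated_def by blast
  have "norm (F (fst p) (snd p) x) \<le> \<bar>g x\<bar> + \<bar>h x\<bar>" if "F \<in> set (Fs @ Gs)" "p \<in> unit_sq" for F p x
  proof (cases "F \<in> set Fs")
    case True
    then show ?thesis using Fs(2)[OF True that(2), of x] abs_ge_self[of "g x"] abs_ge_zero[of "h x"] by linarith
  next
    case False
    then have "F \<in> set Gs" using that(1) by simp
    then show ?thesis using Gs(2)[OF _ that(2), of F x] abs_ge_self[of "h x"] abs_ge_zero[of "g x"] by linarith
  qed
  moreover have "(\<lambda>x. \<bar>g x\<bar> + \<bar>h x\<bar>) \<in> borel_measurable lborel"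
    using g(1) h(1) by measurable
  moreover have "integrable lborel (\<lambda>x. (\<bar>g x\<bar> + \<bar>h x\<bar>)\<^sup>2 * \<rho> x)"
    by (rule integrable_square_sum_abs[OF \<rho> g(1) h(1) g(2) h(2)])
  ultimately show ?thesis
    unfolding L2_dominated_def using Fs(1) Gs(1)
    by (intro conjI exI[of _ "\<lambda>x. \<bar>g x\<bar> + \<bar>h x\<bar>"]) auto
qed

lemma L2_dominated_bounded:
  fixes W :: "'a::euclidean_space \<Rightarrow> 'a"
  assumes "integrable lborel \<rho>" "W \<in> borel_measurable lborel" "\<And>x. norm (W x) \<le> c"
  shows "L2_dominated \<rho> [\<lambda>s t. W]"
  unfolding L2_dominated_def by (intro conjI exI[of _ "\<lambda>x. c"]) (use assms in auto)

definition continuous_in_param :: "(real \<Rightarrow> real \<Rightarrow> 'a \<Rightarrow> 'b::topological_space) \<Rightarrow> bool" where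
  "continuous_in_param F \<longleftrightarrow> (\<forall>x. continuous_on unit_sq (\<lambda>q. F (fst q) (snd q) x))"

lemma C1_param_continuous_in_param:
  assumes "C1_param F Fs Ft"
  shows "continuous_in_param F" "continuous_in_param Fs" "continuous_in_param Ft"
proof -
  show "continuous_in_param F"
    unfolding continuous_in_param_def
  proof
    fix x
    show "continuous_on unit_sq (\<lambda>q. F (fst q) (snd q) x)"
      using assms unfolding C1_param_def by (intro has_derivative_continuous_on) blast
  qed
  show "continuous_in_param Fs" "continuous_in_param Ft"
    using assms unfolding C1_param_def continuous_in_param_def by blast+
qed

lemma C1_param_has_vector_derivative_fst:
  assumes "C1_param F Fs Ft" "\<sigma> \<in> {0..1}" "t \<in> {0..1}"
  shows "((\<lambda>\<sigma>. F \<sigma> t x) has_vector_derivative Fs \<sigma> t x) (at \<sigma> within {0..1})"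
proof -
  have d: "\<And>p. p \<in> unit_sq \<Longrightarrow> ((\<lambda>q. F (fst q) (snd q) x) has_derivative
      (\<lambda>h. fst h *\<^sub>R Fs (fst p) (snd p) x + snd h *\<^sub>R Ft (fst p) (snd p) x)) (at p within unit_sq)"
    using assms(1) unfolding C1_param_def by blast
  have "((\<lambda>y. (\<lambda>q. F (fst q) (snd q) x) ((\<lambda>y. (y, t)) y)) has_derivative
      (\<lambda>h. fst (h, 0::real) *\<^sub>R Fs (fst (\<sigma>, t)) (snd (\<sigma>, t)) x + snd (h, 0::real) *\<^sub>R Ft (fst (\<sigma>, t)) (snd (\<sigma>, t)) x))
      (at \<sigma> within {0..1})"
    by (rule has_derivative_in_compose2[OF d, of "\<lambda>y. (y, t)" "{0..1}" \<sigma> "\<lambda>h. (h, 0)"])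
       (use assms in \<open>auto simp: unit_sq_def intro!: derivative_eq_intros\<close>)
  then show ?thesis unfolding has_vector_derivative_def by simp
qed

lemma C1_param_has_vector_derivative_snd:
  assumes "C1_param F Fs Ft" "s \<in> {0..1}" "\<tau> \<in> {0..1}"
  shows "((\<lambda>\<tau>. F s \<tau> x) has_vector_derivative Ft s \<tau> x) (at \<tau> within {0..1})"
proof -
  have d: "\<And>p. p \<in> unit_sq \<Longrightarrow> ((\<lambda>q. F (fst q) (snd q) x) has_derivative
      (\<lambda>h. fst h *\<^sub>R Fs (fst p) (snd p) x + snd h *\<^sub>R Ft (fst p) (snd p) x)) (at p within unit_sq)"
    using assms(1) unfolding C1_param_def by blast
  have "((\<lambda>y. (\<lambda>q. F (fst q) (snd q) x) ((\<lambda>y. (s, y)) y)) has_derivative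
      (\<lambda>h. fst (0::real, h) *\<^sub>R Fs (fst (s, \<tau>)) (snd (s, \<tau>)) x + snd (0::real, h) *\<^sub>R Ft (fst (s, \<tau>)) (snd (s, \<tau>)) x))
      (at \<tau> within {0..1})"
    by (rule has_derivative_in_compose2[OF d, of "\<lambda>y. (s, y)" "{0..1}" \<tau> "\<lambda>h. (0, h)"])
       (use assms in \<open>auto simp: unit_sq_def intro!: derivative_eq_intros\<close>)
  then show ?thesis unfolding has_vector_derivative_def by simp
qed

section \<open>Integration over the unit square\<close>

lemma unit_sq_cbox: "unit_sq = cbox (0, 0) (1, 1)"
  unfolding unit_sq_def by (simp add: cbox_Pair_eq)

lemma mem_box_unit_sq: "(s, t) \<in> box (0, 0) (1::real, 1::real) \<longleftrightarrow> s \<in> {0<..<1} \<and> t \<in> {0<..<1}"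
  by (auto simp: mem_box Basis_prod_def)

lemma closure_box_unit_sq: "closure (box (0, 0) (1::real, 1::real)) = unit_sq"
proof -
  have "box (0, 0) (1::real, 1::real) \<noteq> {}" using mem_box_unit_sq[of "1/2" "1/2"] by auto
  then show ?thesis unfolding unit_sq_cbox by (rule closure_box)
qed

lemma integrable_on_unit_sq: "continuous_on unit_sq f \<Longrightarrow> f integrable_on unit_sq"
  for f :: "real \<times> real \<Rightarrow> 'b::banach"
  unfolding unit_sq_cbox by (rule integrable_continuous)

lemma has_integral_unit_sq: "continuous_on unit_sq f \<Longrightarrow> (f has_integral integral unit_sq f) unit_sq"
  for f :: "real \<times> real \<Rightarrow> 'b::banach"
  by (rule integrable_integral[OF integrable_on_unit_sq])

lemma integral_unit_sq_iterated:
  fixes f :: "real \<times> real \<Rightarrow> 'b::banach"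
  assumes "continuous_on unit_sq f"
  shows "integral unit_sq f = integral {0..1} (\<lambda>s. integral {0..1} (\<lambda>t. f (s, t)))"
  using integral_prod_continuous[of 0 0 1 1 f] assms unfolding unit_sq_cbox by (simp add: cbox_interval)

lemma integral_unit_sq_iterated_swap:
  fixes f :: "real \<times> real \<Rightarrow> 'b::banach"
  assumes "continuous_on unit_sq f"
  shows "integral unit_sq f = integral {0..1} (\<lambda>t. integral {0..1} (\<lambda>s. f (s, t)))"
proof -
  have "integral (cbox 0 1) (\<lambda>s. integral (cbox 0 1) (\<lambda>t. f (s, t)))
      = integral (cbox 0 1) (\<lambda>t. integral (cbox 0 1) (\<lambda>s. f (s, t)))"
    by (rule integral_swap_continuous) (use assms in \<open>simp add: unit_sq_cbox case_prod_unfold\<close>)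
  then show ?thesis using integral_unit_sq_iterated[OF assms] by (simp add: cbox_interval)
qed

lemma integral_by_parts_vanishing_ends:
  fixes k f k' f' :: "real \<Rightarrow> real"
  assumes k: "\<And>\<sigma>. \<sigma> \<in> {0..1} \<Longrightarrow> (k has_real_derivative k' \<sigma>) (at \<sigma> within {0..1})"
    and f: "\<And>\<sigma>. \<sigma> \<in> {0..1} \<Longrightarrow> (f has_real_derivative f' \<sigma>) (at \<sigma> within {0..1})"
    and ends: "f 0 = 0" "f 1 = 0"
    and cont: "continuous_on {0..1} k'" "continuous_on {0..1} f"
  shows "integral {0..1} (\<lambda>\<sigma>. k \<sigma> * f' \<sigma>) = - integral {0..1} (\<lambda>\<sigma>. k' \<sigma> * f \<sigma>)"
proof -
  have "((\<lambda>\<sigma>. k' \<sigma> * f \<sigma> + k \<sigma> * f' \<sigma>) has_integral (k 1 * f 1 - k 0 * f 0)) {0..1}"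
    by (rule fundamental_theorem_of_calculus)
       (auto intro!: derivative_eq_intros k f simp: has_real_derivative_iff_has_vector_derivative[symmetric] algebra_simps)
  then have sum: "((\<lambda>\<sigma>. k' \<sigma> * f \<sigma> + k \<sigma> * f' \<sigma>) has_integral 0) {0..1}" using ends by simp
  have int1: "(\<lambda>\<sigma>. k' \<sigma> * f \<sigma>) integrable_on {0..1}"
    by (intro integrable_continuous_interval continuous_intros cont)
  have "(\<lambda>\<sigma>. (k' \<sigma> * f \<sigma> + k \<sigma> * f' \<sigma>) - k' \<sigma> * f \<sigma>) integrable_on {0..1}"
    by (rule integrable_diff[OF has_integral_integrable[OF sum] int1])
  then have int2: "(\<lambda>\<sigma>. k \<sigma> * f' \<sigma>) integrable_on {0..1}" by simp
  show ?thesis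
    using integral_unique[OF sum] integral_add[OF int1 int2] by simp
qed

lemma integral_unit_sq_by_parts_fst:
  fixes k f ks fs :: "real \<times> real \<Rightarrow> real"
  assumes k: "\<And>\<sigma> t. \<sigma> \<in> {0..1} \<Longrightarrow> t \<in> {0..1} \<Longrightarrow> ((\<lambda>\<sigma>. k (\<sigma>, t)) has_real_derivative ks (\<sigma>, t)) (at \<sigma> within {0..1})"
    and f: "\<And>\<sigma> t. \<sigma> \<in> {0..1} \<Longrightarrow> t \<in> {0..1} \<Longrightarrow> ((\<lambda>\<sigma>. f (\<sigma>, t)) has_real_derivative fs (\<sigma>, t)) (at \<sigma> within {0..1})"
    and ends: "\<And>t. t \<in> {0..1} \<Longrightarrow> f (0, t) = 0" "\<And>t. t \<in> {0..1} \<Longrightarrow> f (1, t) = 0"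
    and cont: "continuous_on unit_sq k" "continuous_on unit_sq ks" "continuous_on unit_sq f" "continuous_on unit_sq fs"
  shows "integral unit_sq (\<lambda>q. k q * fs q) = - integral unit_sq (\<lambda>q. ks q * f q)"
proof -
  have slice: "continuous_on {0..1} (\<lambda>\<sigma>. h (\<sigma>, t))" if "continuous_on unit_sq h" "t \<in> {0..1}" for h t
    by (rule continuous_on_compose2[OF that(1)]) (use that(2) in \<open>auto intro!: continuous_intros simp: unit_sq_def\<close>)
  have "integral unit_sq (\<lambda>q. k q * fs q) = integral {0..1} (\<lambda>t. integral {0..1} (\<lambda>s. k (s, t) * fs (s, t)))"
    by (rule integral_unit_sq_iterated_swap) (intro continuous_intros cont)
  also have "\<dots> = integral {0..1} (\<lambda>t. - integral {0..1} (\<lambda>s. ks (s, t) * f (s, t)))"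
    by (rule integral_cong, rule integral_by_parts_vanishing_ends[where k = "\<lambda>\<sigma>. k (\<sigma>, _)" and f = "\<lambda>\<sigma>. f (\<sigma>, _)"])
       (auto intro!: k f ends slice cont)
  also have "\<dots> = - integral unit_sq (\<lambda>q. ks q * f q)"
    by (subst integral_unit_sq_iterated_swap) (auto intro!: continuous_intros cont simp: integral_neg)
  finally show ?thesis .
qed

lemma integral_unit_sq_by_parts_snd:
  fixes k f kt ft :: "real \<times> real \<Rightarrow> real"
  assumes k: "\<And>\<tau> s. \<tau> \<in> {0..1} \<Longrightarrow> s \<in> {0..1} \<Longrightarrow> ((\<lambda>\<tau>. k (s, \<tau>)) has_real_derivative kt (s, \<tau>)) (at \<tau> within {0..1})"
    and f: "\<And>\<tau> s. \<tau> \<in> {0..1} \<Longrightarrow> s \<in> {0..1} \<Longrightarrow> ((\<lambda>\<tau>. f (s, \<tau>)) has_real_derivative ft (s, \<tau>)) (at \<tau> within {0..1})"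
    and ends: "\<And>s. s \<in> {0..1} \<Longrightarrow> f (s, 0) = 0" "\<And>s. s \<in> {0..1} \<Longrightarrow> f (s, 1) = 0"
    and cont: "continuous_on unit_sq k" "continuous_on unit_sq kt" "continuous_on unit_sq f" "continuous_on unit_sq ft"
  shows "integral unit_sq (\<lambda>q. k q * ft q) = - integral unit_sq (\<lambda>q. kt q * f q)"
proof -
  have slice: "continuous_on {0..1} (\<lambda>\<tau>. h (s, \<tau>))" if "continuous_on unit_sq h" "s \<in> {0..1}" for h s
    by (rule continuous_on_compose2[OF that(1)]) (use that(2) in \<open>auto intro!: continuous_intros simp: unit_sq_def\<close>)
  have "integral unit_sq (\<lambda>q. k q * ft q) = integral {0..1} (\<lambda>s. integral {0..1} (\<lambda>t. k (s, t) * ft (s, t)))"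
    by (rule integral_unit_sq_iterated) (intro continuous_intros cont)
  also have "\<dots> = integral {0..1} (\<lambda>s. - integral {0..1} (\<lambda>t. kt (s, t) * f (s, t)))"
    by (rule integral_cong, rule integral_by_parts_vanishing_ends[where k = "\<lambda>\<tau>. k (_, \<tau>)" and f = "\<lambda>\<tau>. f (_, \<tau>)"])
       (auto intro!: k f ends slice cont)
  also have "\<dots> = - integral unit_sq (\<lambda>q. kt q * f q)"
    by (subst integral_unit_sq_iterated) (auto intro!: continuous_intros cont simp: integral_neg)
  finally show ?thesis .
qed

lemma has_real_derivative_sqrt_gram:
  fixes a b c :: "real \<Rightarrow> real"
  assumes "(a has_real_derivative a') (at x within S)" "(b has_real_derivative b') (at x within S)"
    and "(c has_real_derivative c') (at x within S)"
    and pos: "a x * b x - (c x)\<^sup>2 > 0"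
  shows "((\<lambda>y. sqrt (a y * b y - (c y)\<^sup>2)) has_real_derivative
           (a' * b x + a x * b' - 2 * c x * c') / (2 * sqrt (a x * b x - (c x)\<^sup>2))) (at x within S)"
proof -
  have "((\<lambda>y. a y * b y - (c y)\<^sup>2) has_real_derivative (a' * b x + a x * b' - 2 * c x * c')) (at x within S)"
    using DERIV_diff[OF DERIV_mult[OF assms(1,2)] DERIV_mult[OF assms(3,3)]]
    by (simp add: power2_eq_square algebra_simps)
  from DERIV_chain2[OF DERIV_real_sqrt[OF pos] this] show ?thesis
    by (simp add: field_simps)
qed

section \<open>Bump functions and the fundamental lemma\<close>

lemma has_real_derivative_max0_square: "((\<lambda>u. (max 0 u)\<^sup>2) has_real_derivative 2 * max 0 u) (at u)"
proof (cases u "0::real" rule: linorder_cases)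
  case less
  have "((\<lambda>u. 0) has_real_derivative 2 * max 0 u) (at u)" using less by simp
  then show ?thesis
    by (rule has_field_derivative_transform_within_open[where S = "{..<0}"]) (use less in auto)
next
  case equal
  have "(\<lambda>y. ((max 0 y)\<^sup>2 - (max 0 u)\<^sup>2) / (y - u)) = (\<lambda>y. max 0 y)"
    using equal by (auto simp: fun_eq_iff power2_eq_square max_def)
  moreover have "((\<lambda>y. max 0 y) \<longlongrightarrow> 2 * max 0 u) (at u)"
    using equal tendsto_max[OF tendsto_const tendsto_ident_at, of 0 u UNIV] by simp
  ultimately show ?thesis unfolding has_field_derivative_iff by simp
next
  case greater
  have "((\<lambda>u. u\<^sup>2) has_real_derivative 2 * max 0 u) (at u)"
    using greater by (auto intro!: derivative_eq_intros)
  then show ?thesis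
    by (rule has_field_derivative_transform_within_open[where S = "{0<..}"]) (use greater in auto)
qed

definition bump :: "real \<Rightarrow> real \<Rightarrow> real \<Rightarrow> real" where
  "bump a r s = (max 0 (r\<^sup>2 - (s - a)\<^sup>2))\<^sup>2"

definition bump' :: "real \<Rightarrow> real \<Rightarrow> real \<Rightarrow> real" where
  "bump' a r s = - 4 * max 0 (r\<^sup>2 - (s - a)\<^sup>2) * (s - a)"

lemma has_real_derivative_bump: "(bump a r has_real_derivative bump' a r s) (at s)"
proof -
  have "((\<lambda>s. r\<^sup>2 - (s - a)\<^sup>2) has_real_derivative - 2 * (s - a)) (at s)"
    by (auto intro!: derivative_eq_intros)
  from DERIV_chain2[OF has_real_derivative_max0_square[of "r\<^sup>2 - (s - a)\<^sup>2"] this] show ?thesis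
    unfolding bump_def bump'_def by (simp add: algebra_simps)
qed

lemma continuous_on_bump: "continuous_on S (bump a r)" "continuous_on S (bump' a r)"
  unfolding bump_def bump'_def by (intro continuous_intros)+

lemma bump_nonneg: "0 \<le> bump a r s"
  by (simp add: bump_def)

lemma bump_pos_iff: "0 < bump a r s \<longleftrightarrow> \<bar>s - a\<bar> < \<bar>r\<bar>"
proof -
  have "\<bar>s - a\<bar> < \<bar>r\<bar> \<longleftrightarrow> (s - a)\<^sup>2 < r\<^sup>2"
    by (metis abs_le_square_iff not_le)
  then show ?thesis unfolding bump_def by (auto simp: max_def)
qed

lemma bump_eq_0_iff: "bump a r s = 0 \<longleftrightarrow> \<bar>r\<bar> \<le> \<bar>s - a\<bar>"
  using bump_pos_iff[of a r s] bump_nonneg[of a r s] by linarith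

lemma bump_le_one:
  assumes "\<bar>r\<bar> \<le> 1"
  shows "bump a r s \<le> 1"
proof -
  have "r\<^sup>2 \<le> 1" using assms abs_le_square_iff[of r 1] by simp
  then have "max 0 (r\<^sup>2 - (s - a)\<^sup>2) \<le> 1" using zero_le_power2[of "s - a"] by linarith
  then show ?thesis unfolding bump_def by (simp add: power_le_one)
qed

lemma abs_bump'_le:
  assumes "\<bar>r\<bar> \<le> 1"
  shows "\<bar>bump' a r s\<bar> \<le> 4"
proof (cases "r\<^sup>2 \<le> (s - a)\<^sup>2")
  case True
  then show ?thesis unfolding bump'_def by (simp add: max_def)
next
  case False
  have r2: "r\<^sup>2 \<le> 1" using assms abs_le_square_iff[of r 1] by simp
  then have "\<bar>s - a\<bar> \<le> 1" using False abs_le_square_iff[of "s - a" 1] by simp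
  moreover have "max 0 (r\<^sup>2 - (s - a)\<^sup>2) \<le> 1" using r2 zero_le_power2[of "s - a"] by linarith
  ultimately have "max 0 (r\<^sup>2 - (s - a)\<^sup>2) * \<bar>s - a\<bar> \<le> 1 * 1" by (intro mult_mono) auto
  then show ?thesis unfolding bump'_def by (simp add: abs_mult)
qed

lemma bump_integrals_vanish_imp_nonpos:
  fixes h :: "real \<times> real \<Rightarrow> real"
  assumes h: "continuous_on unit_sq h"
    and vanish: "\<And>r. 0 < r \<Longrightarrow> r \<le> a \<Longrightarrow> r \<le> 1 - a \<Longrightarrow> r \<le> b \<Longrightarrow> r \<le> 1 - b \<Longrightarrow>
        integral unit_sq (\<lambda>q. bump a r (fst q) * bump b r (snd q) * h q) = 0"
    and ab: "0 < a" "a < 1" "0 < b" "b < 1"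
  shows "h (a, b) \<le> 0"
proof (rule ccontr)
  assume "\<not> h (a, b) \<le> 0"
  then have pos: "h (a, b) > 0" by simp
  have p: "(a, b) \<in> unit_sq" using ab by (simp add: unit_sq_def)
  obtain d where d: "d > 0" and near: "\<forall>q\<in>unit_sq. dist q (a, b) < d \<longrightarrow> dist (h q) (h (a, b)) < h (a, b)"
    using h p pos unfolding continuous_on_iff by blast
  define r where "r = min (d / 2) (min (min a (1 - a)) (min b (1 - b)))"
  have r: "0 < r" "r \<le> a" "r \<le> 1 - a" "r \<le> b" "r \<le> 1 - b" "2 * r \<le> d"
    using d ab min.cobounded1[of "d / 2" "min (min a (1 - a)) (min b (1 - b))"]
    unfolding r_def by auto
  define f where "f q = bump a r (fst q) * bump b r (snd q) * h q" for q
  have "continuous_on unit_sq (\<lambda>q. bump a r (fst q) * bump b r (snd q))"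
    unfolding bump_def by (intro continuous_intros)
  then have f_cont: "continuous_on (cbox (0, 0) (1, 1)) f"
    unfolding f_def[abs_def] unit_sq_cbox[symmetric] using h by (rule continuous_on_mult)
  have f_nonneg: "0 \<le> f q" if "q \<in> unit_sq" for q
  proof (cases "\<bar>fst q - a\<bar> < r \<and> \<bar>snd q - b\<bar> < r")
    case True
    have "dist q (a, b) \<le> \<bar>fst q - a\<bar> + \<bar>snd q - b\<bar>"
      by (cases q) (simp add: dist_Pair_Pair dist_real_def sqrt_sum_squares_le_sum_abs)
    then have "dist q (a, b) < d" using True r(6) by linarith
    then have "h q > 0" using near that by (auto simp: dist_real_def)
    then show ?thesis unfolding f_def by (simp add: bump_nonneg)
  next
    case False
    then have "bump a r (fst q) = 0 \<or> bump b r (snd q) = 0"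
      using r(1) by (auto simp: bump_eq_0_iff)
    then show ?thesis unfolding f_def by auto
  qed
  have f_int: "(f has_integral 0) (cbox (0, 0) (1, 1))"
    using has_integral_unit_sq[OF f_cont[folded unit_sq_cbox]] vanish[OF r(1-5)]
    unfolding f_def[abs_def] unit_sq_cbox by simp
  have "f (a, b) = 0"
  proof (rule has_integral_0_cbox_imp_0[OF f_cont _ f_int])
    show "0 \<le> f q" if "q \<in> box (0, 0) (1, 1)" for q
      using f_nonneg[of q] that box_subset_cbox[of "(0::real, 0::real)" "(1, 1)"]
      unfolding unit_sq_cbox by auto
    have "(a, b) \<in> box (0, 0) (1::real, 1::real)"
      using ab by (simp add: mem_box_unit_sq)
    then show "box (0, 0) (1::real, 1::real) \<noteq> {}" by blast
    show "(a, b) \<in> cbox (0, 0) (1, 1)"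
      using p unfolding unit_sq_cbox .
  qed
  moreover have "f (a, b) > 0"
    using pos r(1) unfolding f_def by (simp add: bump_pos_iff)
  ultimately show False by simp
qed

lemma bump_integrals_vanish_imp_zero:
  fixes h :: "real \<times> real \<Rightarrow> real"
  assumes h: "continuous_on unit_sq h"
    and vanish: "\<And>a b r. 0 < r \<Longrightarrow> r \<le> a \<Longrightarrow> r \<le> 1 - a \<Longrightarrow> r \<le> b \<Longrightarrow> r \<le> 1 - b \<Longrightarrow>
        integral unit_sq (\<lambda>q. bump a r (fst q) * bump b r (snd q) * h q) = 0"
    and p: "p \<in> box (0, 0) (1, 1)"
  shows "h p = 0"
proof -
  obtain a b where p_eq: "p = (a, b)" and ab: "0 < a" "a < 1" "0 < b" "b < 1"
    using p mem_box_unit_sq by (cases p) auto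
  have "h (a, b) \<le> 0"
    by (rule bump_integrals_vanish_imp_nonpos[OF h vanish ab])
  moreover have "- h (a, b) \<le> 0"
  proof (rule bump_integrals_vanish_imp_nonpos[OF continuous_on_minus[OF h] _ ab])
    fix r :: real assume "0 < r" "r \<le> a" "r \<le> 1 - a" "r \<le> b" "r \<le> 1 - b"
    from vanish[OF this] show "integral unit_sq (\<lambda>q. bump a r (fst q) * bump b r (snd q) * - h q) = 0"
      by (simp add: integral_neg)
  qed
  ultimately show ?thesis unfolding p_eq by simp
qed

lemma C1_param_scaleR_product:
  fixes W :: "'a \<Rightarrow> 'b::real_normed_vector"
  assumes \<phi>: "\<And>s. (\<phi> has_real_derivative \<phi>' s) (at s)" and \<psi>: "\<And>t. (\<psi> has_real_derivative \<psi>' t) (at t)"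
    and cont: "continuous_on UNIV \<phi>'" "continuous_on UNIV \<psi>'"
  shows "C1_param (\<lambda>s t x. (\<phi> s * \<psi> t) *\<^sub>R W x)
           (\<lambda>s t x. (\<phi>' s * \<psi> t) *\<^sub>R W x) (\<lambda>s t x. (\<phi> s * \<psi>' t) *\<^sub>R W x)"
  unfolding C1_param_def
proof (intro allI conjI ballI)
  fix x and p :: "real \<times> real"
  have d1: "((\<lambda>q. \<phi> (fst q)) has_derivative (\<lambda>h. \<phi>' (fst p) * fst h)) (at p within unit_sq)"
    using has_derivative_compose[OF has_derivative_fst[OF has_derivative_ident] \<phi>[unfolded has_field_derivative_def]] .
  have d2: "((\<lambda>q. \<psi> (snd q)) has_derivative (\<lambda>h. \<psi>' (snd p) * snd h)) (at p within unit_sq)"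
    using has_derivative_compose[OF has_derivative_snd[OF has_derivative_ident] \<psi>[unfolded has_field_derivative_def]] .
  show "((\<lambda>q. (\<phi> (fst q) * \<psi> (snd q)) *\<^sub>R W x) has_derivative
      (\<lambda>h. fst h *\<^sub>R (\<phi>' (fst p) * \<psi> (snd p)) *\<^sub>R W x + snd h *\<^sub>R (\<phi> (fst p) * \<psi>' (snd p)) *\<^sub>R W x))
      (at p within unit_sq)"
    by (rule has_derivative_eq_rhs[OF has_derivative_scaleR_left[OF has_derivative_mult[OF d1 d2]]])
       (simp add: fun_eq_iff algebra_simps)
next
  fix x
  have slice: "continuous_on unit_sq (\<lambda>q. f (fst q))" "continuous_on unit_sq (\<lambda>q. f (snd q))"
    if "continuous_on UNIV f" for f :: "real \<Rightarrow> real"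
    using continuous_on_compose2[OF that continuous_on_fst[OF continuous_on_id]]
      continuous_on_compose2[OF that continuous_on_snd[OF continuous_on_id]] by auto
  have "continuous_on UNIV \<phi>" "continuous_on UNIV \<psi>"
    using \<phi> \<psi> by (auto intro!: continuous_at_imp_continuous_on DERIV_isCont)
  with cont have "continuous_on unit_sq (\<lambda>q. \<phi> (fst q))" "continuous_on unit_sq (\<lambda>q. \<psi> (snd q))"
    "continuous_on unit_sq (\<lambda>q. \<phi>' (fst q))" "continuous_on unit_sq (\<lambda>q. \<psi>' (snd q))"
    by (simp_all add: slice)
  then show "continuous_on unit_sq (\<lambda>q. (\<phi>' (fst q) * \<psi> (snd q)) *\<^sub>R W x)"
    "continuous_on unit_sq (\<lambda>q. (\<phi> (fst q) * \<psi>' (snd q)) *\<^sub>R W x)"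
    by (auto intro: continuous_on_scaleR continuous_on_mult continuous_on_const)
qed

lemma test_map_bump:
  fixes W :: "'a::euclidean_space \<Rightarrow> 'a" and \<rho> :: "'a \<Rightarrow> real"
  assumes W: "W \<in> borel_measurable lborel" "\<And>x. norm (W x) \<le> 1"
    and \<rho>: "integrable lborel \<rho>"
    and r: "0 < r" "r \<le> a" "r \<le> 1 - a" "r \<le> b" "r \<le> 1 - b"
  shows "test_map \<rho> (\<lambda>s t x. (bump a r s * bump b r t) *\<^sub>R W x)
           (\<lambda>s t x. (bump' a r s * bump b r t) *\<^sub>R W x) (\<lambda>s t x. (bump a r s * bump' b r t) *\<^sub>R W x)"
proof -
  have r1: "\<bar>r\<bar> \<le> 1" using r by simp
  have b1: "\<bar>bump c r u\<bar> \<le> 1" and b4: "\<bar>bump' c r u\<bar> \<le> 4" for c u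
    using bump_le_one[OF r1, of c u] abs_bump'_le[OF r1, of c u] bump_nonneg[of c r u] by auto
  have coeff: "\<bar>bump a r s * bump b r t\<bar> \<le> 4" "\<bar>bump' a r s * bump b r t\<bar> \<le> 4"
    "\<bar>bump a r s * bump' b r t\<bar> \<le> 4" for s t
    using mult_mono[OF b1 b1 zero_le_one abs_ge_zero, of a s b t] mult_mono[OF b4 b1 _ abs_ge_zero, of a s b t]
      mult_mono[OF b1 b4 zero_le_one abs_ge_zero, of a s b t] by (simp_all add: abs_mult)
  have norm_le: "norm (c *\<^sub>R W x) \<le> 4" if "\<bar>c\<bar> \<le> 4" for c x
    using mult_mono[OF that W(2)[of x] _ norm_ge_zero] by simp
  have "L2_dominated \<rho> [\<lambda>s t x. (bump a r s * bump b r t) *\<^sub>R W x,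
      \<lambda>s t x. (bump' a r s * bump b r t) *\<^sub>R W x, \<lambda>s t x. (bump a r s * bump' b r t) *\<^sub>R W x]"
    unfolding L2_dominated_def
    by (intro conjI exI[of _ "\<lambda>x. 4"]) (use W(1) \<rho> norm_le coeff in auto)
  moreover have "bump a r 0 = 0" "bump a r 1 = 0" "bump b r 0 = 0" "bump b r 1 = 0"
    using r by (simp_all add: bump_eq_0_iff)
  moreover have "C1_param (\<lambda>s t x. (bump a r s * bump b r t) *\<^sub>R W x)
      (\<lambda>s t x. (bump' a r s * bump b r t) *\<^sub>R W x) (\<lambda>s t x. (bump a r s * bump' b r t) *\<^sub>R W x)"
    by (intro C1_param_scaleR_product has_real_derivative_bump continuous_on_bump)
  ultimately show ?thesis
    unfolding test_map_def by simp
qed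

section \<open>The Gram coefficients and the Euler--Lagrange expression\<close>

lemma vector_derivative_at_interior:
  assumes "(f has_vector_derivative f') (at x within {a..b})" "x \<in> {a<..<b::real}"
  shows "vector_derivative f (at x) = f'"
proof -
  have "(f has_vector_derivative f') (at x within {a<..<b})"
    by (rule has_vector_derivative_within_subset[OF assms(1)]) auto
  then have "(f has_vector_derivative f') (at x)"
    using assms(2) at_within_open[of x "{a<..<b}"] by simp
  then show ?thesis by (rule vector_derivative_at)
qed

lemmas continuous_on_field_ops = continuous_on_add continuous_on_diff continuous_on_mult
  continuous_on_divide continuous_on_power continuous_on_const continuous_on_real_sqrt

locale EL_setting =
  fixes \<rho> :: "'a::euclidean_space \<Rightarrow> real"
    and Ts Tt Tss Tst Tts Ttt :: "real \<Rightarrow> real \<Rightarrow> 'a \<Rightarrow> 'a"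
  assumes \<rho>_measurable: "\<rho> \<in> borel_measurable lborel"
    and \<rho>_nonneg: "\<And>x. \<rho> x \<ge> 0"
    and Ts_C1: "C1_param Ts Tss Tst"
    and Tt_C1: "C1_param Tt Tts Ttt"
    and T_dominated: "L2_dominated \<rho> [Ts, Tt, Tss, Tst, Tts, Ttt]"
    and Dfun_pos: "\<And>s t. s \<in> {0..1} \<Longrightarrow> t \<in> {0..1} \<Longrightarrow> Dfun \<rho> Ts Tt s t > 0"
begin

definition l2_inner :: "(real \<Rightarrow> real \<Rightarrow> 'a \<Rightarrow> 'a) \<Rightarrow> (real \<Rightarrow> real \<Rightarrow> 'a \<Rightarrow> 'a) \<Rightarrow> real \<times> real \<Rightarrow> real" where
  "l2_inner F G q = wint \<rho> (\<lambda>x. F (fst q) (snd q) x \<bullet> G (fst q) (snd q) x)"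

lemma l2_inner_commute: "l2_inner F G = l2_inner G F"
  unfolding l2_inner_def by (simp add: inner_commute fun_eq_iff)

lemma has_bochner_integral_l2_inner:
  assumes "L2_dominated \<rho> [F, G]" "s \<in> {0..1}" "t \<in> {0..1}"
  shows "has_bochner_integral lborel (\<lambda>x. (F s t x \<bullet> G s t x) * \<rho> x) (l2_inner F G (s, t))"
proof -
  obtain g where "g \<in> borel_measurable lborel" and g: "integrable lborel (\<lambda>x. (g x)\<^sup>2 * \<rho> x)"
    and meas: "\<And>H s t. H \<in> set [F, G] \<Longrightarrow> s \<in> {0..1} \<Longrightarrow> t \<in> {0..1} \<Longrightarrow> H s t \<in> borel_measurable lborel"
    and bound: "\<And>H s t x. H \<in> set [F, G] \<Longrightarrow> s \<in> {0..1} \<Longrightarrow> t \<in> {0..1} \<Longrightarrow> norm (H s t x) \<le> g x"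
    using assms(1) by (rule L2_dominatedE) blast
  have "integrable lborel (\<lambda>x. (F s t x \<bullet> G s t x) * \<rho> x)"
    by (rule integrable_weighted_inner[OF \<rho>_measurable \<rho>_nonneg g]) (use meas bound assms(2,3) in auto)
  then show ?thesis
    unfolding l2_inner_def wint_def by (simp add: has_bochner_integral_integrable)
qed

lemma continuous_on_l2_inner:
  assumes "L2_dominated \<rho> [F, G]" "continuous_in_param F" "continuous_in_param G"
  shows "continuous_on unit_sq (l2_inner F G)"
proof -
  obtain g where "g \<in> borel_measurable lborel" and g: "integrable lborel (\<lambda>x. (g x)\<^sup>2 * \<rho> x)"
    and meas: "\<And>H s t. H \<in> set [F, G] \<Longrightarrow> s \<in> {0..1} \<Longrightarrow> t \<in> {0..1} \<Longrightarrow> H s t \<in> borel_measurable lborel"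
    and bound: "\<And>H s t x. H \<in> set [F, G] \<Longrightarrow> s \<in> {0..1} \<Longrightarrow> t \<in> {0..1} \<Longrightarrow> norm (H s t x) \<le> g x"
    using assms(1) by (rule L2_dominatedE) blast
  show ?thesis
    unfolding l2_inner_def[abs_def] wint_def
    by (rule continuous_on_weighted_inner_integral[OF \<rho>_measurable \<rho>_nonneg g,
          where F = "\<lambda>q. F (fst q) (snd q)" and G = "\<lambda>q. G (fst q) (snd q)"])
       (use meas bound assms(2,3) in \<open>auto simp: continuous_in_param_def unit_sq_def\<close>)
qed

lemma l2_inner_has_derivative_fst:
  assumes F: "C1_param F Fs Ft" and G: "C1_param G Gs Gt"
    and dom: "L2_dominated \<rho> [F, G, Fs, Gs]"
    and \<sigma>: "\<sigma> \<in> {0..1}" and t: "t \<in> {0..1}"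
  shows "((\<lambda>\<sigma>. l2_inner F G (\<sigma>, t)) has_real_derivative l2_inner Fs G (\<sigma>, t) + l2_inner F Gs (\<sigma>, t)) (at \<sigma> within {0..1})"
proof -
  obtain g where "g \<in> borel_measurable lborel" and g: "integrable lborel (\<lambda>x. (g x)\<^sup>2 * \<rho> x)"
    and meas: "\<And>H s t. H \<in> set [F, G, Fs, Gs] \<Longrightarrow> s \<in> {0..1} \<Longrightarrow> t \<in> {0..1} \<Longrightarrow> H s t \<in> borel_measurable lborel"
    and bound: "\<And>H s t x. H \<in> set [F, G, Fs, Gs] \<Longrightarrow> s \<in> {0..1} \<Longrightarrow> t \<in> {0..1} \<Longrightarrow> norm (H s t x) \<le> g x"
    using dom by (rule L2_dominatedE) blast
  have "convex {0..1::real}" by (rule convex_real_interval)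
  from has_real_derivative_weighted_inner_integral[OF \<rho>_measurable \<rho>_nonneg g this \<sigma>,
      where F = "\<lambda>\<sigma>. F \<sigma> t" and G = "\<lambda>\<sigma>. G \<sigma> t" and F' = "\<lambda>\<sigma>. Fs \<sigma> t" and G' = "\<lambda>\<sigma>. Gs \<sigma> t"]
  show ?thesis
    unfolding l2_inner_def wint_def fst_conv snd_conv
    using meas bound t C1_param_has_vector_derivative_fst[OF F] C1_param_has_vector_derivative_fst[OF G]
    by simp
qed

lemma l2_inner_has_derivative_snd:
  assumes F: "C1_param F Fs Ft" and G: "C1_param G Gs Gt"
    and dom: "L2_dominated \<rho> [F, G, Ft, Gt]"
    and s: "s \<in> {0..1}" and \<tau>: "\<tau> \<in> {0..1}"
  shows "((\<lambda>\<tau>. l2_inner F G (s, \<tau>)) has_real_derivative l2_inner Ft G (s, \<tau>) + l2_inner F Gt (s, \<tau>)) (at \<tau> within {0..1})"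
proof -
  obtain g where "g \<in> borel_measurable lborel" and g: "integrable lborel (\<lambda>x. (g x)\<^sup>2 * \<rho> x)"
    and meas: "\<And>H s t. H \<in> set [F, G, Ft, Gt] \<Longrightarrow> s \<in> {0..1} \<Longrightarrow> t \<in> {0..1} \<Longrightarrow> H s t \<in> borel_measurable lborel"
    and bound: "\<And>H s t x. H \<in> set [F, G, Ft, Gt] \<Longrightarrow> s \<in> {0..1} \<Longrightarrow> t \<in> {0..1} \<Longrightarrow> norm (H s t x) \<le> g x"
    using dom by (rule L2_dominatedE) blast
  have "convex {0..1::real}" by (rule convex_real_interval)
  from has_real_derivative_weighted_inner_integral[OF \<rho>_measurable \<rho>_nonneg g this \<tau>,
      where F = "\<lambda>\<tau>. F s \<tau>" and G = "\<lambda>\<tau>. G s \<tau>" and F' = "\<lambda>\<tau>. Ft s \<tau>" and G' = "\<lambda>\<tau>. Gt s \<tau>"]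
  show ?thesis
    unfolding l2_inner_def wint_def fst_conv snd_conv
    using meas bound s C1_param_has_vector_derivative_snd[OF F] C1_param_has_vector_derivative_snd[OF G]
    by simp
qed

lemma T_dominated_subset: "set Fs \<subseteq> {Ts, Tt, Tss, Tst, Tts, Ttt} \<Longrightarrow> L2_dominated \<rho> Fs"
  by (rule L2_dominated_subset[OF T_dominated]) simp

lemma L2_dominated_cons_T:
  assumes "L2_dominated \<rho> [V]" "F \<in> {Ts, Tt, Tss, Tst, Tts, Ttt}"
  shows "L2_dominated \<rho> [V, F]"
  using L2_dominated_subset[OF L2_dominated_append[OF \<rho>_measurable \<rho>_nonneg assms(1) T_dominated]] assms(2)
  by auto

lemma T_continuous: "F \<in> {Ts, Tt, Tss, Tst, Tts, Ttt} \<Longrightarrow> continuous_in_param F"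
  using C1_param_continuous_in_param[OF Ts_C1] C1_param_continuous_in_param[OF Tt_C1] by auto

lemma continuous_on_l2_inner_T:
  "F \<in> {Ts, Tt, Tss, Tst, Tts, Ttt} \<Longrightarrow> G \<in> {Ts, Tt, Tss, Tst, Tts, Ttt} \<Longrightarrow> continuous_on unit_sq (l2_inner F G)"
  by (rule continuous_on_l2_inner) (auto intro: T_dominated_subset T_continuous)

definition "A = l2_inner Ts Ts"
definition "B = l2_inner Tt Tt"
definition "C = l2_inner Ts Tt"
definition "D q = sqrt (A q * B q - (C q)\<^sup>2)"

definition "As q = l2_inner Tss Ts q + l2_inner Ts Tss q"
definition "Bs q = l2_inner Tts Tt q + l2_inner Tt Tts q"
definition "Cs q = l2_inner Tss Tt q + l2_inner Ts Tts q"
definition "At q = l2_inner Tst Ts q + l2_inner Ts Tst q"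
definition "Bt q = l2_inner Ttt Tt q + l2_inner Tt Ttt q"
definition "Ct q = l2_inner Tst Tt q + l2_inner Ts Ttt q"
definition "Ds q = (As q * B q + A q * Bs q - 2 * C q * Cs q) / (2 * D q)"
definition "Dt q = (At q * B q + A q * Bt q - 2 * C q * Ct q) / (2 * D q)"

definition "div_D_deriv_fst N Ns q = (Ns q * D q - Ds q * N q) / (D q)\<^sup>2"
definition "div_D_deriv_snd N Nt q = (Nt q * D q - Dt q * N q) / (D q)\<^sup>2"

lemma Dfun_eq_D: "Dfun \<rho> Ts Tt s t = D (s, t)"
  unfolding Dfun_def D_def A_def B_def C_def l2_inner_def by (simp add: power2_norm_eq_inner)

lemma D_pos: "q \<in> unit_sq \<Longrightarrow> D q > 0"
  using Dfun_pos[of "fst q" "snd q"] Dfun_eq_D[of "fst q" "snd q"] by (auto simp: unit_sq_def)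

lemma gram_det_pos: "q \<in> unit_sq \<Longrightarrow> A q * B q - (C q)\<^sup>2 > 0"
  using D_pos unfolding D_def by simp

lemma ABC_has_derivative_fst:
  assumes "\<sigma> \<in> {0..1}" "t \<in> {0..1}"
  shows "((\<lambda>\<sigma>. A (\<sigma>, t)) has_real_derivative As (\<sigma>, t)) (at \<sigma> within {0..1})"
    and "((\<lambda>\<sigma>. B (\<sigma>, t)) has_real_derivative Bs (\<sigma>, t)) (at \<sigma> within {0..1})"
    and "((\<lambda>\<sigma>. C (\<sigma>, t)) has_real_derivative Cs (\<sigma>, t)) (at \<sigma> within {0..1})"
  unfolding A_def B_def C_def As_def Bs_def Cs_def
  by (rule l2_inner_has_derivative_fst[OF Ts_C1 Ts_C1 T_dominated_subset assms]
        l2_inner_has_derivative_fst[OF Tt_C1 Tt_C1 T_dominated_subset assms]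
        l2_inner_has_derivative_fst[OF Ts_C1 Tt_C1 T_dominated_subset assms]; simp)+

lemma ABC_has_derivative_snd:
  assumes "s \<in> {0..1}" "\<tau> \<in> {0..1}"
  shows "((\<lambda>\<tau>. A (s, \<tau>)) has_real_derivative At (s, \<tau>)) (at \<tau> within {0..1})"
    and "((\<lambda>\<tau>. B (s, \<tau>)) has_real_derivative Bt (s, \<tau>)) (at \<tau> within {0..1})"
    and "((\<lambda>\<tau>. C (s, \<tau>)) has_real_derivative Ct (s, \<tau>)) (at \<tau> within {0..1})"
  unfolding A_def B_def C_def At_def Bt_def Ct_def
  by (rule l2_inner_has_derivative_snd[OF Ts_C1 Ts_C1 T_dominated_subset assms]
        l2_inner_has_derivative_snd[OF Tt_C1 Tt_C1 T_dominated_subset assms]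
        l2_inner_has_derivative_snd[OF Ts_C1 Tt_C1 T_dominated_subset assms]; simp)+

lemma D_has_derivative_fst:
  assumes "\<sigma> \<in> {0..1}" "t \<in> {0..1}"
  shows "((\<lambda>\<sigma>. D (\<sigma>, t)) has_real_derivative Ds (\<sigma>, t)) (at \<sigma> within {0..1})"
  unfolding D_def Ds_def
  by (rule has_real_derivative_sqrt_gram[OF ABC_has_derivative_fst[OF assms] gram_det_pos])
     (use assms in \<open>simp add: unit_sq_def\<close>)

lemma D_has_derivative_snd:
  assumes "s \<in> {0..1}" "\<tau> \<in> {0..1}"
  shows "((\<lambda>\<tau>. D (s, \<tau>)) has_real_derivative Dt (s, \<tau>)) (at \<tau> within {0..1})"
  unfolding D_def Dt_def
  by (rule has_real_derivative_sqrt_gram[OF ABC_has_derivative_snd[OF assms] gram_det_pos])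
     (use assms in \<open>simp add: unit_sq_def\<close>)

lemma div_D_has_derivative_fst:
  assumes N: "((\<lambda>\<sigma>. N (\<sigma>, t)) has_real_derivative Ns (\<sigma>, t)) (at \<sigma> within {0..1})"
    and st: "\<sigma> \<in> {0..1}" "t \<in> {0..1}"
  shows "((\<lambda>\<sigma>. N (\<sigma>, t) / D (\<sigma>, t)) has_real_derivative div_D_deriv_fst N Ns (\<sigma>, t)) (at \<sigma> within {0..1})"
  using DERIV_quotient[OF N D_has_derivative_fst[OF st]] D_pos[of "(\<sigma>, t)"] st
  unfolding div_D_deriv_fst_def by (simp add: unit_sq_def power2_eq_square)

lemma div_D_has_derivative_snd:
  assumes N: "((\<lambda>\<tau>. N (s, \<tau>)) has_real_derivative Nt (s, \<tau>)) (at \<tau> within {0..1})"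
    and st: "s \<in> {0..1}" "\<tau> \<in> {0..1}"
  shows "((\<lambda>\<tau>. N (s, \<tau>) / D (s, \<tau>)) has_real_derivative div_D_deriv_snd N Nt (s, \<tau>)) (at \<tau> within {0..1})"
  using DERIV_quotient[OF N D_has_derivative_snd[OF st]] D_pos[of "(s, \<tau>)"] st
  unfolding div_D_deriv_snd_def by (simp add: unit_sq_def power2_eq_square)

lemma D_nonzero: "q \<in> unit_sq \<Longrightarrow> D q \<noteq> 0"
  using D_pos by fastforce

lemma continuous_on_coefficients:
  "continuous_on unit_sq A" "continuous_on unit_sq B" "continuous_on unit_sq C"
  "continuous_on unit_sq As" "continuous_on unit_sq Bs" "continuous_on unit_sq Cs"
  "continuous_on unit_sq At" "continuous_on unit_sq Bt" "continuous_on unit_sq Ct"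
  "continuous_on unit_sq D" "continuous_on unit_sq Ds" "continuous_on unit_sq Dt"
proof -
  show A: "continuous_on unit_sq A" and B: "continuous_on unit_sq B" and C: "continuous_on unit_sq C"
    and As: "continuous_on unit_sq As" and Bs: "continuous_on unit_sq Bs" and Cs: "continuous_on unit_sq Cs"
    and At: "continuous_on unit_sq At" and Bt: "continuous_on unit_sq Bt" and Ct: "continuous_on unit_sq Ct"
    unfolding A_def B_def C_def As_def[abs_def] Bs_def[abs_def] Cs_def[abs_def]
      At_def[abs_def] Bt_def[abs_def] Ct_def[abs_def]
    by (intro continuous_on_add continuous_on_l2_inner_T; simp)+
  show D: "continuous_on unit_sq D"
    unfolding D_def[abs_def] by (intro continuous_on_field_ops A B C)
  show "continuous_on unit_sq Ds" "continuous_on unit_sq Dt"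
    unfolding Ds_def[abs_def] Dt_def[abs_def]
    by (intro continuous_on_field_ops A B C As Bs Cs At Bt Ct D; simp add: D_nonzero)+
qed

lemma continuous_on_div_D: "continuous_on unit_sq N \<Longrightarrow> continuous_on unit_sq (\<lambda>q. N q / D q)"
  by (intro continuous_on_divide continuous_on_coefficients) (auto simp: D_nonzero)

lemma continuous_on_div_D_deriv:
  assumes "continuous_on unit_sq N" "continuous_on unit_sq N'"
  shows "continuous_on unit_sq (div_D_deriv_fst N N')" "continuous_on unit_sq (div_D_deriv_snd N N')"
  unfolding div_D_deriv_fst_def[abs_def] div_D_deriv_snd_def[abs_def]
  by (intro continuous_on_field_ops continuous_on_coefficients assms; simp add: D_nonzero)+

definition EL :: "real \<Rightarrow> real \<Rightarrow> 'a \<Rightarrow> 'a" where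
  "EL s t x =
       (div_D_deriv_fst B Bs (s, t) *\<^sub>R Ts s t x + (B (s, t) / D (s, t)) *\<^sub>R Tss s t x)
     + (div_D_deriv_snd A At (s, t) *\<^sub>R Tt s t x + (A (s, t) / D (s, t)) *\<^sub>R Ttt s t x)
     - (div_D_deriv_snd C Ct (s, t) *\<^sub>R Ts s t x + (C (s, t) / D (s, t)) *\<^sub>R Tst s t x)
     - (div_D_deriv_fst C Cs (s, t) *\<^sub>R Tt s t x + (C (s, t) / D (s, t)) *\<^sub>R Tts s t x)"

lemma EL_lhs_eq_EL:
  assumes s: "s \<in> {0<..<1}" and t: "t \<in> {0<..<1}"
  shows "EL_lhs \<rho> Ts Tt s t x = EL s t x"
proof -
  have st: "s \<in> {0..1}" "t \<in> {0..1}" using s t by auto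
  have ABC: "wint \<rho> (\<lambda>y. (norm (Ts \<sigma> \<tau> y))\<^sup>2) = A (\<sigma>, \<tau>)" "wint \<rho> (\<lambda>y. (norm (Tt \<sigma> \<tau> y))\<^sup>2) = B (\<sigma>, \<tau>)"
    "wint \<rho> (\<lambda>y. Ts \<sigma> \<tau> y \<bullet> Tt \<sigma> \<tau> y) = C (\<sigma>, \<tau>)" for \<sigma> \<tau>
    unfolding A_def B_def C_def l2_inner_def by (simp_all add: power2_norm_eq_inner)
  have 1: "vector_derivative (\<lambda>\<sigma>. (B (\<sigma>, t) / D (\<sigma>, t)) *\<^sub>R Ts \<sigma> t x) (at s)
      = (B (s, t) / D (s, t)) *\<^sub>R Tss s t x + div_D_deriv_fst B Bs (s, t) *\<^sub>R Ts s t x"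
    by (rule vector_derivative_at_interior[OF has_vector_derivative_scaleR[OF
          div_D_has_derivative_fst[where N = B and Ns = Bs, OF ABC_has_derivative_fst(2)] C1_param_has_vector_derivative_fst[OF Ts_C1]]])
       (use s st in auto)
  have 2: "vector_derivative (\<lambda>\<tau>. (A (s, \<tau>) / D (s, \<tau>)) *\<^sub>R Tt s \<tau> x) (at t)
      = (A (s, t) / D (s, t)) *\<^sub>R Ttt s t x + div_D_deriv_snd A At (s, t) *\<^sub>R Tt s t x"
    by (rule vector_derivative_at_interior[OF has_vector_derivative_scaleR[OF
          div_D_has_derivative_snd[where N = A and Nt = At, OF ABC_has_derivative_snd(1)] C1_param_has_vector_derivative_snd[OF Tt_C1]]])
       (use t st in auto)
  have 3: "vector_derivative (\<lambda>\<tau>. (C (s, \<tau>) / D (s, \<tau>)) *\<^sub>R Ts s \<tau> x) (at t)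
      = (C (s, t) / D (s, t)) *\<^sub>R Tst s t x + div_D_deriv_snd C Ct (s, t) *\<^sub>R Ts s t x"
    by (rule vector_derivative_at_interior[OF has_vector_derivative_scaleR[OF
          div_D_has_derivative_snd[where N = C and Nt = Ct, OF ABC_has_derivative_snd(3)] C1_param_has_vector_derivative_snd[OF Ts_C1]]])
       (use t st in auto)
  have 4: "vector_derivative (\<lambda>\<sigma>. (C (\<sigma>, t) / D (\<sigma>, t)) *\<^sub>R Tt \<sigma> t x) (at s)
      = (C (s, t) / D (s, t)) *\<^sub>R Tts s t x + div_D_deriv_fst C Cs (s, t) *\<^sub>R Tt s t x"
    by (rule vector_derivative_at_interior[OF has_vector_derivative_scaleR[OF
          div_D_has_derivative_fst[where N = C and Ns = Cs, OF ABC_has_derivative_fst(3)] C1_param_has_vector_derivative_fst[OF Tt_C1]]])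
       (use s st in auto)
  show ?thesis
    unfolding EL_lhs_def ABC Dfun_eq_D 1 2 3 4 EL_def by (simp add: algebra_simps)
qed

lemma EL_measurable:
  assumes "s \<in> {0..1}" "t \<in> {0..1}"
  shows "EL s t \<in> borel_measurable lborel"
proof -
  obtain g where "g \<in> borel_measurable lborel" "integrable lborel (\<lambda>x. (g x)\<^sup>2 * \<rho> x)"
    and meas: "\<And>F s t. F \<in> set [Ts, Tt, Tss, Tst, Tts, Ttt] \<Longrightarrow> s \<in> {0..1} \<Longrightarrow> t \<in> {0..1} \<Longrightarrow>
        F s t \<in> borel_measurable lborel"
    and "\<And>F s t x. F \<in> set [Ts, Tt, Tss, Tst, Tts, Ttt] \<Longrightarrow> s \<in> {0..1} \<Longrightarrow> t \<in> {0..1} \<Longrightarrow>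
        norm (F s t x) \<le> g x"
    using T_dominated by (rule L2_dominatedE) blast
  have [measurable]: "Ts s t \<in> borel_measurable lborel" "Tt s t \<in> borel_measurable lborel"
    "Tss s t \<in> borel_measurable lborel" "Tst s t \<in> borel_measurable lborel"
    "Tts s t \<in> borel_measurable lborel" "Ttt s t \<in> borel_measurable lborel"
    using meas assms by simp_all
  show ?thesis
    unfolding EL_def[abs_def] by measurable
qed

definition EL_pairing :: "(real \<Rightarrow> real \<Rightarrow> 'a \<Rightarrow> 'a) \<Rightarrow> real \<times> real \<Rightarrow> real" where
  "EL_pairing V q =
       (div_D_deriv_fst B Bs q * l2_inner V Ts q + B q / D q * l2_inner V Tss q)
     + (div_D_deriv_snd A At q * l2_inner V Tt q + A q / D q * l2_inner V Ttt q)
     - (div_D_deriv_snd C Ct q * l2_inner V Ts q + C q / D q * l2_inner V Tst q)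
     - (div_D_deriv_fst C Cs q * l2_inner V Tt q + C q / D q * l2_inner V Tts q)"

lemma has_bochner_integral_l2_inner_EL:
  assumes V: "L2_dominated \<rho> [V]" and st: "s \<in> {0..1}" "t \<in> {0..1}"
  shows "has_bochner_integral lborel (\<lambda>x. (V s t x \<bullet> EL s t x) * \<rho> x) (EL_pairing V (s, t))"
proof -
  have parts: "has_bochner_integral lborel (\<lambda>x. (V s t x \<bullet> F s t x) * \<rho> x) (l2_inner V F (s, t))"
    if "F \<in> {Ts, Tt, Tss, Tst, Tts, Ttt}" for F
    by (rule has_bochner_integral_l2_inner[OF L2_dominated_cons_T[OF V that] st])
  have "has_bochner_integral lborel (\<lambda>x.
        (div_D_deriv_fst B Bs (s, t) * ((V s t x \<bullet> Ts s t x) * \<rho> x) + B (s, t) / D (s, t) * ((V s t x \<bullet> Tss s t x) * \<rho> x))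
      + (div_D_deriv_snd A At (s, t) * ((V s t x \<bullet> Tt s t x) * \<rho> x) + A (s, t) / D (s, t) * ((V s t x \<bullet> Ttt s t x) * \<rho> x))
      - (div_D_deriv_snd C Ct (s, t) * ((V s t x \<bullet> Ts s t x) * \<rho> x) + C (s, t) / D (s, t) * ((V s t x \<bullet> Tst s t x) * \<rho> x))
      - (div_D_deriv_fst C Cs (s, t) * ((V s t x \<bullet> Tt s t x) * \<rho> x) + C (s, t) / D (s, t) * ((V s t x \<bullet> Tts s t x) * \<rho> x)))
    (EL_pairing V (s, t))"
    unfolding EL_pairing_def
    by (intro has_bochner_integral_add has_bochner_integral_diff has_bochner_integral_mult_right parts) simp_all
  moreover have "(\<lambda>x.
        (div_D_deriv_fst B Bs (s, t) * ((V s t x \<bullet> Ts s t x) * \<rho> x) + B (s, t) / D (s, t) * ((V s t x \<bullet> Tss s t x) * \<rho> x))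
      + (div_D_deriv_snd A At (s, t) * ((V s t x \<bullet> Tt s t x) * \<rho> x) + A (s, t) / D (s, t) * ((V s t x \<bullet> Ttt s t x) * \<rho> x))
      - (div_D_deriv_snd C Ct (s, t) * ((V s t x \<bullet> Ts s t x) * \<rho> x) + C (s, t) / D (s, t) * ((V s t x \<bullet> Tst s t x) * \<rho> x))
      - (div_D_deriv_fst C Cs (s, t) * ((V s t x \<bullet> Tt s t x) * \<rho> x) + C (s, t) / D (s, t) * ((V s t x \<bullet> Tts s t x) * \<rho> x)))
    = (\<lambda>x. (V s t x \<bullet> EL s t x) * \<rho> x)"
    by (rule ext) (simp add: EL_def inner_add_right inner_diff_right distrib_right left_diff_distrib)
  ultimately show ?thesis by simp
qed

lemma l2_inner_EL_eq:
  assumes "L2_dominated \<rho> [V]" "q \<in> unit_sq"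
  shows "l2_inner V EL q = EL_pairing V q"
proof -
  obtain s t where q: "q = (s, t)" "s \<in> {0..1}" "t \<in> {0..1}"
    using assms(2) unfolding unit_sq_def by auto
  show ?thesis
    using has_bochner_integral_integral_eq[OF has_bochner_integral_l2_inner_EL[OF assms(1) q(2,3)]]
    unfolding q(1) l2_inner_def wint_def by simp
qed

lemma continuous_on_l2_inner_EL:
  assumes "L2_dominated \<rho> [V]" "continuous_in_param V"
  shows "continuous_on unit_sq (l2_inner V EL)"
proof (rule continuous_on_eq[OF _ l2_inner_EL_eq[OF assms(1), symmetric]])
  have "continuous_on unit_sq (l2_inner V F)" if "F \<in> {Ts, Tt, Tss, Tst, Tts, Ttt}" for F
    by (rule continuous_on_l2_inner[OF L2_dominated_cons_T[OF assms(1) that] assms(2) T_continuous[OF that]])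
  then show "continuous_on unit_sq (EL_pairing V)"
    unfolding EL_pairing_def[abs_def]
    by (intro continuous_on_add continuous_on_diff continuous_on_mult continuous_on_div_D_deriv
        continuous_on_div_D continuous_on_coefficients) simp_all
qed

end

section \<open>The first variation\<close>

locale EL_variation = EL_setting +
  fixes V Vs Vt :: "real \<Rightarrow> real \<Rightarrow> 'a \<Rightarrow> 'a"
  assumes V_test: "test_map \<rho> V Vs Vt"
begin

lemma V_C1: "C1_param V Vs Vt"
  using V_test unfolding test_map_def by blast

lemma V_boundary: "r \<in> {0..1} \<Longrightarrow> V 0 r x = 0 \<and> V 1 r x = 0 \<and> V r 0 x = 0 \<and> V r 1 x = 0"
  using V_test unfolding test_map_def by blast

lemma TV_dominated_subset:
  assumes "set Fs \<subseteq> {Ts, Tt, Tss, Tst, Tts, Ttt, V, Vs, Vt}"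
  shows "L2_dominated \<rho> Fs"
proof -
  have "L2_dominated \<rho> ([Ts, Tt, Tss, Tst, Tts, Ttt] @ [V, Vs, Vt])"
    using V_test unfolding test_map_def by (intro L2_dominated_append \<rho>_measurable \<rho>_nonneg T_dominated) auto
  then show ?thesis by (rule L2_dominated_subset) (use assms in simp)
qed

lemma continuous_on_l2_inner_TV:
  assumes "F \<in> {Ts, Tt, Tss, Tst, Tts, Ttt, V, Vs, Vt}" "G \<in> {Ts, Tt, Tss, Tst, Tts, Ttt, V, Vs, Vt}"
  shows "continuous_on unit_sq (l2_inner F G)"
proof -
  have "continuous_in_param H" if "H \<in> {Ts, Tt, Tss, Tst, Tts, Ttt, V, Vs, Vt}" for H
    using that T_continuous C1_param_continuous_in_param[OF V_C1] by auto
  then show ?thesis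
    using assms by (intro continuous_on_l2_inner TV_dominated_subset) auto
qed

lemma l2_inner_V_boundary:
  "r \<in> {0..1} \<Longrightarrow> l2_inner F V (0, r) = 0 \<and> l2_inner F V (1, r) = 0 \<and> l2_inner F V (r, 0) = 0 \<and> l2_inner F V (r, 1) = 0"
  unfolding l2_inner_def wint_def using V_boundary by simp

lemma integral_l2_inner_Vs_by_parts:
  assumes K: "\<And>\<sigma> t. \<sigma> \<in> {0..1} \<Longrightarrow> t \<in> {0..1} \<Longrightarrow>
        ((\<lambda>\<sigma>. K (\<sigma>, t)) has_real_derivative Ks (\<sigma>, t)) (at \<sigma> within {0..1})"
    and K_cont: "continuous_on unit_sq K" "continuous_on unit_sq Ks"
    and F: "C1_param F Fs Ft" "{F, Fs} \<subseteq> {Ts, Tt, Tss, Tst, Tts, Ttt}"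
  shows "integral unit_sq (\<lambda>q. K q * l2_inner F Vs q)
    = - integral unit_sq (\<lambda>q. Ks q * l2_inner V F q) - integral unit_sq (\<lambda>q. K q * l2_inner V Fs q)"
proof -
  have "integral unit_sq (\<lambda>q. K q * (l2_inner Fs V q + l2_inner F Vs q)) = - integral unit_sq (\<lambda>q. Ks q * l2_inner F V q)"
  proof (rule integral_unit_sq_by_parts_fst[OF K])
    show "((\<lambda>\<sigma>. l2_inner F V (\<sigma>, t)) has_real_derivative l2_inner Fs V (\<sigma>, t) + l2_inner F Vs (\<sigma>, t)) (at \<sigma> within {0..1})"
      if "\<sigma> \<in> {0..1}" "t \<in> {0..1}" for \<sigma> t
      by (rule l2_inner_has_derivative_fst[OF F(1) V_C1 TV_dominated_subset that]) (use F(2) in auto)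
  qed (use l2_inner_V_boundary K_cont F(2) in \<open>auto intro!: continuous_on_add continuous_on_l2_inner_TV\<close>)
  moreover have "integral unit_sq (\<lambda>q. K q * (l2_inner Fs V q + l2_inner F Vs q))
      = integral unit_sq (\<lambda>q. K q * l2_inner V Fs q) + integral unit_sq (\<lambda>q. K q * l2_inner F Vs q)"
    unfolding l2_inner_commute[of Fs V] distrib_left
    by (intro integral_add integrable_on_unit_sq continuous_on_mult K_cont continuous_on_l2_inner_TV)
       (use F(2) in auto)
  ultimately show ?thesis unfolding l2_inner_commute[of F V] by linarith
qed

lemma integral_l2_inner_Vt_by_parts:
  assumes K: "\<And>\<tau> s. \<tau> \<in> {0..1} \<Longrightarrow> s \<in> {0..1} \<Longrightarrow>
        ((\<lambda>\<tau>. K (s, \<tau>)) has_real_derivative Kt (s, \<tau>)) (at \<tau> within {0..1})"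
    and K_cont: "continuous_on unit_sq K" "continuous_on unit_sq Kt"
    and F: "C1_param F Fs Ft" "{F, Ft} \<subseteq> {Ts, Tt, Tss, Tst, Tts, Ttt}"
  shows "integral unit_sq (\<lambda>q. K q * l2_inner F Vt q)
    = - integral unit_sq (\<lambda>q. Kt q * l2_inner V F q) - integral unit_sq (\<lambda>q. K q * l2_inner V Ft q)"
proof -
  have "integral unit_sq (\<lambda>q. K q * (l2_inner Ft V q + l2_inner F Vt q)) = - integral unit_sq (\<lambda>q. Kt q * l2_inner F V q)"
  proof (rule integral_unit_sq_by_parts_snd[OF K])
    show "((\<lambda>\<tau>. l2_inner F V (s, \<tau>)) has_real_derivative l2_inner Ft V (s, \<tau>) + l2_inner F Vt (s, \<tau>)) (at \<tau> within {0..1})"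
      if "\<tau> \<in> {0..1}" "s \<in> {0..1}" for \<tau> s
      by (rule l2_inner_has_derivative_snd[OF F(1) V_C1 TV_dominated_subset that(2,1)]) (use F(2) in auto)
  qed (use l2_inner_V_boundary K_cont F(2) in \<open>auto intro!: continuous_on_add continuous_on_l2_inner_TV\<close>)
  moreover have "integral unit_sq (\<lambda>q. K q * (l2_inner Ft V q + l2_inner F Vt q))
      = integral unit_sq (\<lambda>q. K q * l2_inner V Ft q) + integral unit_sq (\<lambda>q. K q * l2_inner F Vt q)"
    unfolding l2_inner_commute[of Ft V] distrib_left
    by (intro integral_add integrable_on_unit_sq continuous_on_mult K_cont continuous_on_l2_inner_TV)
       (use F(2) in auto)
  ultimately show ?thesis unfolding l2_inner_commute[of F V] by linarith
qed

definition D_variation :: "real \<times> real \<Rightarrow> real" where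
  "D_variation q =
     (B q * l2_inner Ts Vs q + A q * l2_inner Tt Vt q - C q * (l2_inner Ts Vt q + l2_inner Tt Vs q)) / D q"

lemma integral_D_variation:
  "integral unit_sq D_variation =
       integral unit_sq (\<lambda>q. B q / D q * l2_inner Ts Vs q) + integral unit_sq (\<lambda>q. A q / D q * l2_inner Tt Vt q)
     - integral unit_sq (\<lambda>q. C q / D q * l2_inner Ts Vt q) - integral unit_sq (\<lambda>q. C q / D q * l2_inner Tt Vs q)"
proof -
  have split: "D_variation = (\<lambda>q. B q / D q * l2_inner Ts Vs q + A q / D q * l2_inner Tt Vt q
      - C q / D q * l2_inner Ts Vt q - C q / D q * l2_inner Tt Vs q)"
    by (simp add: fun_eq_iff D_variation_def add_divide_distrib diff_divide_distrib algebra_simps)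
  have "((\<lambda>q. B q / D q * l2_inner Ts Vs q + A q / D q * l2_inner Tt Vt q
      - C q / D q * l2_inner Ts Vt q - C q / D q * l2_inner Tt Vs q) has_integral
       (integral unit_sq (\<lambda>q. B q / D q * l2_inner Ts Vs q) + integral unit_sq (\<lambda>q. A q / D q * l2_inner Tt Vt q)
      - integral unit_sq (\<lambda>q. C q / D q * l2_inner Ts Vt q) - integral unit_sq (\<lambda>q. C q / D q * l2_inner Tt Vs q)))
      unit_sq"
    by (intro has_integral_add has_integral_diff has_integral_unit_sq continuous_on_mult continuous_on_div_D
        continuous_on_coefficients continuous_on_l2_inner_TV) simp_all
  then show ?thesis unfolding split by (rule integral_unique)
qed

lemma integral_EL_pairing:
  "integral unit_sq (EL_pairing V) =
       (integral unit_sq (\<lambda>q. div_D_deriv_fst B Bs q * l2_inner V Ts q) + integral unit_sq (\<lambda>q. B q / D q * l2_inner V Tss q))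
     + (integral unit_sq (\<lambda>q. div_D_deriv_snd A At q * l2_inner V Tt q) + integral unit_sq (\<lambda>q. A q / D q * l2_inner V Ttt q))
     - (integral unit_sq (\<lambda>q. div_D_deriv_snd C Ct q * l2_inner V Ts q) + integral unit_sq (\<lambda>q. C q / D q * l2_inner V Tst q))
     - (integral unit_sq (\<lambda>q. div_D_deriv_fst C Cs q * l2_inner V Tt q) + integral unit_sq (\<lambda>q. C q / D q * l2_inner V Tts q))"
  unfolding EL_pairing_def[abs_def]
  by (intro integral_unique has_integral_add has_integral_diff has_integral_unit_sq continuous_on_mult
      continuous_on_div_D continuous_on_div_D_deriv continuous_on_coefficients continuous_on_l2_inner_TV) simp_all

lemma integral_D_variation_by_parts: "integral unit_sq D_variation = - integral unit_sq (l2_inner V EL)"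
proof -
  have "integral unit_sq (l2_inner V EL) = integral unit_sq (EL_pairing V)"
    using l2_inner_EL_eq[OF TV_dominated_subset] by (intro integral_cong) simp
  moreover have "integral unit_sq (\<lambda>q. B q / D q * l2_inner Ts Vs q)
      = - integral unit_sq (\<lambda>q. div_D_deriv_fst B Bs q * l2_inner V Ts q)
        - integral unit_sq (\<lambda>q. B q / D q * l2_inner V Tss q)"
    by (rule integral_l2_inner_Vs_by_parts[OF div_D_has_derivative_fst[where N = B and Ns = Bs,
          OF ABC_has_derivative_fst(2)] _ _ Ts_C1])
       (simp_all add: continuous_on_div_D continuous_on_div_D_deriv continuous_on_coefficients)
  moreover have "integral unit_sq (\<lambda>q. A q / D q * l2_inner Tt Vt q)
      = - integral unit_sq (\<lambda>q. div_D_deriv_snd A At q * l2_inner V Tt q)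
        - integral unit_sq (\<lambda>q. A q / D q * l2_inner V Ttt q)"
    by (rule integral_l2_inner_Vt_by_parts[OF div_D_has_derivative_snd[where N = A and Nt = At,
          OF ABC_has_derivative_snd(1)] _ _ Tt_C1])
       (simp_all add: continuous_on_div_D continuous_on_div_D_deriv continuous_on_coefficients)
  moreover have "integral unit_sq (\<lambda>q. C q / D q * l2_inner Ts Vt q)
      = - integral unit_sq (\<lambda>q. div_D_deriv_snd C Ct q * l2_inner V Ts q)
        - integral unit_sq (\<lambda>q. C q / D q * l2_inner V Tst q)"
    by (rule integral_l2_inner_Vt_by_parts[OF div_D_has_derivative_snd[where N = C and Nt = Ct,
          OF ABC_has_derivative_snd(3)] _ _ Ts_C1])
       (simp_all add: continuous_on_div_D continuous_on_div_D_deriv continuous_on_coefficients)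
  moreover have "integral unit_sq (\<lambda>q. C q / D q * l2_inner Tt Vs q)
      = - integral unit_sq (\<lambda>q. div_D_deriv_fst C Cs q * l2_inner V Tt q)
        - integral unit_sq (\<lambda>q. C q / D q * l2_inner V Tts q)"
    by (rule integral_l2_inner_Vs_by_parts[OF div_D_has_derivative_fst[where N = C and Ns = Cs,
          OF ABC_has_derivative_fst(3)] _ _ Tt_C1])
       (simp_all add: continuous_on_div_D continuous_on_div_D_deriv continuous_on_coefficients)
  ultimately show ?thesis
    unfolding integral_D_variation integral_EL_pairing by simp
qed

definition gram_det_perturbed :: "real \<Rightarrow> real \<times> real \<Rightarrow> real" where
  "gram_det_perturbed e q =
     (A q + 2 * e * l2_inner Ts Vs q + e\<^sup>2 * l2_inner Vs Vs q) * (B q + 2 * e * l2_inner Tt Vt q + e\<^sup>2 * l2_inner Vt Vt q)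
   - (C q + e * (l2_inner Ts Vt q + l2_inner Tt Vs q) + e\<^sup>2 * l2_inner Vs Vt q)\<^sup>2"

definition gram_det_perturbed_deriv :: "real \<Rightarrow> real \<times> real \<Rightarrow> real" where
  "gram_det_perturbed_deriv e q =
     2 * (l2_inner Ts Vs q + e * l2_inner Vs Vs q) * (B q + 2 * e * l2_inner Tt Vt q + e\<^sup>2 * l2_inner Vt Vt q)
   + (A q + 2 * e * l2_inner Ts Vs q + e\<^sup>2 * l2_inner Vs Vs q) * (2 * (l2_inner Tt Vt q + e * l2_inner Vt Vt q))
   - 2 * (C q + e * (l2_inner Ts Vt q + l2_inner Tt Vs q) + e\<^sup>2 * l2_inner Vs Vt q) * (l2_inner Ts Vt q + l2_inner Tt Vs q + 2 * e * l2_inner Vs Vt q)"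

lemma gram_det_perturbed_has_derivative:
  "((\<lambda>e. gram_det_perturbed e q) has_real_derivative gram_det_perturbed_deriv e q) (at e within S)"
  unfolding gram_det_perturbed_def gram_det_perturbed_deriv_def
  by (auto intro!: derivative_eq_intros simp: power2_eq_square algebra_simps)

lemma wint_inner_add_scaleR:
  assumes "L2_dominated \<rho> [F, G, F', G']" "s \<in> {0..1}" "t \<in> {0..1}"
  shows "wint \<rho> (\<lambda>x. (F s t x + e *\<^sub>R F' s t x) \<bullet> (G s t x + e *\<^sub>R G' s t x))
       = l2_inner F G (s, t) + e * (l2_inner F G' (s, t) + l2_inner F' G (s, t)) + e\<^sup>2 * l2_inner F' G' (s, t)"
proof -
  have parts: "has_bochner_integral lborel (\<lambda>x. (H s t x \<bullet> K s t x) * \<rho> x) (l2_inner H K (s, t))"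
    if "H \<in> {F, F'}" "K \<in> {G, G'}" for H K
    by (rule has_bochner_integral_l2_inner[OF L2_dominated_subset[OF assms(1)] assms(2,3)]) (use that in auto)
  have "has_bochner_integral lborel
      (\<lambda>x. (F s t x \<bullet> G s t x) * \<rho> x + e * ((F s t x \<bullet> G' s t x) * \<rho> x + (F' s t x \<bullet> G s t x) * \<rho> x)
        + e\<^sup>2 * ((F' s t x \<bullet> G' s t x) * \<rho> x))
      (l2_inner F G (s, t) + e * (l2_inner F G' (s, t) + l2_inner F' G (s, t)) + e\<^sup>2 * l2_inner F' G' (s, t))"
    by (intro has_bochner_integral_add has_bochner_integral_mult_right parts) simp_all
  moreover have "(\<lambda>x. (F s t x \<bullet> G s t x) * \<rho> x + e * ((F s t x \<bullet> G' s t x) * \<rho> x + (F' s t x \<bullet> G s t x) * \<rho> x)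
        + e\<^sup>2 * ((F' s t x \<bullet> G' s t x) * \<rho> x))
      = (\<lambda>x. ((F s t x + e *\<^sub>R F' s t x) \<bullet> (G s t x + e *\<^sub>R G' s t x)) * \<rho> x)"
    by (simp add: fun_eq_iff inner_add_left inner_add_right algebra_simps power2_eq_square)
  ultimately have "has_bochner_integral lborel (\<lambda>x. ((F s t x + e *\<^sub>R F' s t x) \<bullet> (G s t x + e *\<^sub>R G' s t x)) * \<rho> x)
      (l2_inner F G (s, t) + e * (l2_inner F G' (s, t) + l2_inner F' G (s, t)) + e\<^sup>2 * l2_inner F' G' (s, t))"
    by simp
  then show ?thesis
    unfolding wint_def by (rule has_bochner_integral_integral_eq)
qed

lemma Dfun_perturbed:
  assumes "s \<in> {0..1}" "t \<in> {0..1}"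
  shows "Dfun \<rho> (\<lambda>s t x. Ts s t x + e *\<^sub>R Vs s t x) (\<lambda>s t x. Tt s t x + e *\<^sub>R Vt s t x) s t
    = sqrt (gram_det_perturbed e (s, t))"
proof -
  have "wint \<rho> (\<lambda>x. (Ts s t x + e *\<^sub>R Vs s t x) \<bullet> (Ts s t x + e *\<^sub>R Vs s t x))
      = l2_inner Ts Ts (s, t) + e * (l2_inner Ts Vs (s, t) + l2_inner Vs Ts (s, t)) + e\<^sup>2 * l2_inner Vs Vs (s, t)"
    "wint \<rho> (\<lambda>x. (Tt s t x + e *\<^sub>R Vt s t x) \<bullet> (Tt s t x + e *\<^sub>R Vt s t x))
      = l2_inner Tt Tt (s, t) + e * (l2_inner Tt Vt (s, t) + l2_inner Vt Tt (s, t)) + e\<^sup>2 * l2_inner Vt Vt (s, t)"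
    "wint \<rho> (\<lambda>x. (Ts s t x + e *\<^sub>R Vs s t x) \<bullet> (Tt s t x + e *\<^sub>R Vt s t x))
      = l2_inner Ts Tt (s, t) + e * (l2_inner Ts Vt (s, t) + l2_inner Vs Tt (s, t)) + e\<^sup>2 * l2_inner Vs Vt (s, t)"
    by (rule wint_inner_add_scaleR[OF TV_dominated_subset assms]; simp)+
  then show ?thesis
    unfolding Dfun_def gram_det_perturbed_def power2_norm_eq_inner A_def B_def C_def
      l2_inner_commute[of Vs Ts] l2_inner_commute[of Vt Tt] l2_inner_commute[of Vs Tt]
    by (simp add: algebra_simps)
qed

lemma continuous_on_gram_det_perturbed:
  "continuous_on (S \<times> unit_sq) (\<lambda>z. gram_det_perturbed (fst z) (snd z))"
  "continuous_on (S \<times> unit_sq) (\<lambda>z. gram_det_perturbed_deriv (fst z) (snd z))"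
proof -
  have lift: "continuous_on (S \<times> unit_sq) (\<lambda>z. f (snd z))" if "continuous_on unit_sq f" for f :: "real \<times> real \<Rightarrow> real"
    by (rule continuous_on_compose2[OF that continuous_on_snd[OF continuous_on_id]]) auto
  have "continuous_on (S \<times> unit_sq) (\<lambda>z. fst z)"
    by (rule continuous_on_fst[OF continuous_on_id])
  then show "continuous_on (S \<times> unit_sq) (\<lambda>z. gram_det_perturbed (fst z) (snd z))"
    "continuous_on (S \<times> unit_sq) (\<lambda>z. gram_det_perturbed_deriv (fst z) (snd z))"
    unfolding gram_det_perturbed_def gram_det_perturbed_deriv_def
    by (intro continuous_on_field_ops lift continuous_on_coefficients continuous_on_l2_inner_TV; simp)+
qed

lemma continuous_on_gram_det_perturbed_slice: "continuous_on unit_sq (gram_det_perturbed e)"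
  unfolding gram_det_perturbed_def[abs_def]
  by (intro continuous_on_field_ops continuous_on_coefficients continuous_on_l2_inner_TV; simp)+

lemma continuous_on_sqrt_gram_det_perturbed: "continuous_on unit_sq (\<lambda>q. sqrt (gram_det_perturbed e q))"
  by (rule continuous_on_real_sqrt[OF continuous_on_gram_det_perturbed_slice])

lemma action_perturbed:
  "action \<rho> (\<lambda>s t x. Ts s t x + e *\<^sub>R Vs s t x) (\<lambda>s t x. Tt s t x + e *\<^sub>R Vt s t x)
     = integral unit_sq (\<lambda>q. sqrt (gram_det_perturbed e q))"
  unfolding action_def integral_unit_sq_iterated[OF continuous_on_sqrt_gram_det_perturbed]
  by (intro integral_cong) (simp add: Dfun_perturbed)

lemma gram_det_perturbed_pos: "\<exists>\<delta>>0. \<forall>e q. \<bar>e\<bar> < \<delta> \<longrightarrow> q \<in> unit_sq \<longrightarrow> gram_det_perturbed e q > 0"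
proof -
  have compact: "compact unit_sq" unfolding unit_sq_cbox by (rule compact_cbox)
  note continuous_on_gram_det_perturbed_slice[of 0]
  moreover have "unit_sq \<noteq> {}" unfolding unit_sq_def by auto
  ultimately obtain q0 where q0: "q0 \<in> unit_sq" and min: "\<And>q. q \<in> unit_sq \<Longrightarrow> gram_det_perturbed 0 q0 \<le> gram_det_perturbed 0 q"
    using continuous_attains_inf[OF compact] by blast
  define m where "m = gram_det_perturbed 0 q0"
  have m: "m > 0"
    using gram_det_pos[OF q0] unfolding m_def gram_det_perturbed_def by simp
  let ?S = "{-1..1::real} \<times> unit_sq"
  have "uniformly_continuous_on ?S (\<lambda>z. gram_det_perturbed (fst z) (snd z))"
    by (intro compact_uniformly_continuous continuous_on_gram_det_perturbed compact_Times compact_Icc compact)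
  then obtain d where d: "d > 0" and close: "\<And>z z'. z \<in> ?S \<Longrightarrow> z' \<in> ?S \<Longrightarrow> dist z' z < d \<Longrightarrow>
      dist (gram_det_perturbed (fst z') (snd z')) (gram_det_perturbed (fst z) (snd z)) < m"
    unfolding uniformly_continuous_on_def using m by metis
  show ?thesis
  proof (intro exI[of _ "min d 1"] conjI allI impI)
    fix e :: real and q assume e: "\<bar>e\<bar> < min d 1" and q: "q \<in> unit_sq"
    have "(0, q) \<in> ?S" "(e, q) \<in> ?S" using e q by auto
    then have "dist (gram_det_perturbed e q) (gram_det_perturbed 0 q) < m"
      using close[of "(0, q)" "(e, q)"] e by (simp add: dist_Pair_Pair dist_real_def)
    moreover have "m \<le> gram_det_perturbed 0 q" unfolding m_def using min[OF q] .
    ultimately show "gram_det_perturbed e q > 0" by (simp add: dist_real_def)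
  qed (use d in simp)
qed

lemma integral_sqrt_gram_det_perturbed_has_derivative:
  "((\<lambda>e. integral unit_sq (\<lambda>q. sqrt (gram_det_perturbed e q))) has_real_derivative
     integral unit_sq D_variation) (at 0)"
proof -
  obtain \<delta> where \<delta>: "\<delta> > 0" and pos: "\<And>e q. \<bar>e\<bar> < \<delta> \<Longrightarrow> q \<in> unit_sq \<Longrightarrow> gram_det_perturbed e q > 0"
    using gram_det_perturbed_pos by blast
  define U where "U = ball (0::real) \<delta>"
  have pos_U: "gram_det_perturbed e q > 0" if "e \<in> U" "q \<in> cbox (0, 0) (1, 1)" for e q
    using pos that unfolding U_def unit_sq_cbox by (simp add: dist_real_def)
  define f' where "f' e q = gram_det_perturbed_deriv e q / (2 * sqrt (gram_det_perturbed e q))" for e q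
  have "((\<lambda>e. integral (cbox (0, 0) (1, 1)) (\<lambda>q. sqrt (gram_det_perturbed e q))) has_field_derivative
      integral (cbox (0, 0) (1, 1)) (f' 0)) (at 0 within U)"
  proof (rule leibniz_rule_field_derivative)
    show "((\<lambda>e. sqrt (gram_det_perturbed e q)) has_field_derivative f' e q) (at e within U)"
      if "e \<in> U" "q \<in> cbox (0, 0) (1, 1)" for e q
      using DERIV_chain2[OF DERIV_real_sqrt[OF pos_U[OF that]] gram_det_perturbed_has_derivative]
      unfolding f'_def by (simp add: field_simps)
    show "(\<lambda>q. sqrt (gram_det_perturbed e q)) integrable_on cbox (0, 0) (1, 1)" for e
      using integrable_on_unit_sq[OF continuous_on_sqrt_gram_det_perturbed] unfolding unit_sq_cbox .
    have "continuous_on (U \<times> unit_sq)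
        (\<lambda>z. gram_det_perturbed_deriv (fst z) (snd z) / (2 * sqrt (gram_det_perturbed (fst z) (snd z))))"
    proof (intro continuous_on_divide continuous_on_mult continuous_on_const continuous_on_real_sqrt
        continuous_on_gram_det_perturbed ballI)
      fix z assume "z \<in> U \<times> unit_sq"
      then show "2 * sqrt (gram_det_perturbed (fst z) (snd z)) \<noteq> 0"
        using pos_U[of "fst z" "snd z"] unfolding unit_sq_cbox by (auto simp: mem_Times_iff)
    qed
    then show "continuous_on (U \<times> cbox (0, 0) (1, 1)) (\<lambda>(e, q). f' e q)"
      unfolding f'_def unit_sq_cbox case_prod_unfold .
    show "0 \<in> U" "convex U" unfolding U_def using \<delta> by auto
  qed
  then have "((\<lambda>e. integral unit_sq (\<lambda>q. sqrt (gram_det_perturbed e q))) has_real_derivative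
      integral unit_sq (f' 0)) (at 0)"
    unfolding U_def unit_sq_cbox using \<delta> by (simp add: at_within_open[OF _ open_ball])
  moreover have "f' 0 = D_variation"
  proof
    fix q
    have deriv: "gram_det_perturbed_deriv 0 q
        = 2 * (B q * l2_inner Ts Vs q + A q * l2_inner Tt Vt q - C q * (l2_inner Ts Vt q + l2_inner Tt Vs q))"
      unfolding gram_det_perturbed_deriv_def by (simp add: algebra_simps)
    have sqrt: "sqrt (gram_det_perturbed 0 q) = D q"
      unfolding gram_det_perturbed_def D_def by simp
    show "f' 0 q = D_variation q"
      unfolding f'_def D_variation_def deriv sqrt by (rule mult_divide_mult_cancel_left) simp
  qed
  ultimately show ?thesis by simp
qed

lemma first_variation:
  "((\<lambda>e. action \<rho> (\<lambda>s t x. Ts s t x + e *\<^sub>R Vs s t x) (\<lambda>s t x. Tt s t x + e *\<^sub>R Vt s t x))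
     has_real_derivative - integral unit_sq (l2_inner V EL)) (at 0)"
  using integral_sqrt_gram_det_perturbed_has_derivative
  unfolding action_perturbed integral_D_variation_by_parts .


end

section \<open>Stationarity is equivalent to the Euler--Lagrange equation\<close>

context EL_setting
begin

lemma stationary_if_EL_vanishes:
  assumes EL_0: "\<forall>s\<in>{0<..<1}. \<forall>t\<in>{0<..<1}.
      AE x in density lborel (\<lambda>x. ennreal (\<rho> x)). EL_lhs \<rho> Ts Tt s t x = 0"
  shows "stationary \<rho> Ts Tt"
  unfolding stationary_def
proof (intro allI impI)
  fix V Vs Vt assume "test_map \<rho> V Vs Vt"
  then interpret V: EL_variation \<rho> Ts Tt Tss Tst Tts Ttt V Vs Vt
    by (intro EL_variation.intro EL_setting_axioms EL_variation_axioms.intro)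
  have interior: "l2_inner V EL (s, t) = 0" if st: "s \<in> {0<..<1}" "t \<in> {0<..<1}" for s t
  proof -
    have "AE x in lborel. 0 < ennreal (\<rho> x) \<longrightarrow> EL s t x = 0"
      using EL_0 st AE_density[of "\<lambda>x. ennreal (\<rho> x)" lborel] \<rho>_measurable
      by (simp add: EL_lhs_eq_EL)
    then have "AE x in lborel. (V s t x \<bullet> EL s t x) * \<rho> x = 0"
      by (rule AE_mp) (use \<rho>_nonneg in \<open>auto intro!: AE_I2 simp: order_less_le\<close>)
    then show ?thesis
      unfolding l2_inner_def wint_def by (simp add: integral_eq_zero_AE)
  qed
  have V_dom: "L2_dominated \<rho> [V]" by (rule V.TV_dominated_subset) simp
  have cont: "continuous_on (closure (box (0, 0) (1, 1))) (l2_inner V EL)"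
    unfolding closure_box_unit_sq
    by (rule continuous_on_l2_inner_EL[OF V_dom C1_param_continuous_in_param(1)[OF V.V_C1]])
  have "l2_inner V EL q = 0" if "q \<in> unit_sq" for q
  proof (rule continuous_constant_on_closure[OF cont])
    show "l2_inner V EL p = 0" if "p \<in> box (0, 0) (1, 1)" for p
      using that interior mem_box_unit_sq by (cases p) simp
    show "q \<in> closure (box (0, 0) (1, 1))"
      using \<open>q \<in> unit_sq\<close> closure_box_unit_sq by simp
  qed
  then have "integral unit_sq (l2_inner V EL) = 0"
    using integral_cong[of unit_sq "l2_inner V EL" "\<lambda>_. 0"] by simp
  then show "((\<lambda>\<epsilon>. action \<rho> (\<lambda>s t x. Ts s t x + \<epsilon> *\<^sub>R Vs s t x) (\<lambda>s t x. Tt s t x + \<epsilon> *\<^sub>R Vt s t x))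
      has_real_derivative 0) (at 0)"
    using V.first_variation by simp
qed

lemma l2_inner_EL_zero_if_stationary:
  assumes \<rho>_int: "integrable lborel \<rho>" and stat: "stationary \<rho> Ts Tt"
    and W: "W \<in> borel_measurable lborel" "\<And>x. norm (W x) \<le> 1"
    and p: "p \<in> box (0, 0) (1, 1)"
  shows "l2_inner (\<lambda>s t. W) EL p = 0"
proof (rule bump_integrals_vanish_imp_zero[OF _ _ p])
  show "continuous_on unit_sq (l2_inner (\<lambda>s t. W) EL)"
    by (rule continuous_on_l2_inner_EL[OF L2_dominated_bounded[OF \<rho>_int W]])
       (simp add: continuous_in_param_def)
next
  fix a b r :: real assume r: "0 < r" "r \<le> a" "r \<le> 1 - a" "r \<le> b" "r \<le> 1 - b"
  let ?V = "\<lambda>s t x. (bump a r s * bump b r t) *\<^sub>R W x"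
  interpret V: EL_variation \<rho> Ts Tt Tss Tst Tts Ttt ?V
      "\<lambda>s t x. (bump' a r s * bump b r t) *\<^sub>R W x" "\<lambda>s t x. (bump a r s * bump' b r t) *\<^sub>R W x"
    by (intro EL_variation.intro EL_setting_axioms EL_variation_axioms.intro test_map_bump W \<rho>_int r)
  have "integral unit_sq (l2_inner ?V EL) = 0"
    using DERIV_unique[OF V.first_variation] stat V.V_test unfolding stationary_def by fastforce
  moreover have "l2_inner ?V EL = (\<lambda>q. bump a r (fst q) * bump b r (snd q) * l2_inner (\<lambda>s t. W) EL q)"
    unfolding l2_inner_def[abs_def] wint_def by (simp add: mult.assoc)
  ultimately show "integral unit_sq (\<lambda>q. bump a r (fst q) * bump b r (snd q) * l2_inner (\<lambda>s t. W) EL q) = 0"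
    by simp
qed

lemma EL_vanishes_if_stationary:
  assumes \<rho>_int: "integrable lborel \<rho>" and stat: "stationary \<rho> Ts Tt"
    and s0: "s0 \<in> {0<..<1}" and t0: "t0 \<in> {0<..<1}"
  shows "AE x in density lborel (\<lambda>x. ennreal (\<rho> x)). EL_lhs \<rho> Ts Tt s0 t0 x = 0"
proof -
  have st0: "s0 \<in> {0..1}" "t0 \<in> {0..1}" using s0 t0 by auto
  define E where "E = EL s0 t0"
  \<comment> \<open>A bounded multiple of \<open>E\<close> with \<open>W \<bullet> E \<ge> 0\<close>, vanishing only where \<open>E\<close> does.\<close>
  define W where "W x = (1 / (1 + norm (E x))) *\<^sub>R E x" for x
  have W_meas: "W \<in> borel_measurable lborel"
    unfolding W_def E_def using EL_measurable[OF st0] by measurable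
  have pos: "0 < 1 + norm (E x)" for x
    by (rule add_pos_nonneg) simp_all
  have W_le: "norm (W x) \<le> 1" for x
    unfolding W_def using pos[of x] by (simp add: divide_le_eq_1)
  have W_E: "W x \<bullet> E x = (norm (E x))\<^sup>2 / (1 + norm (E x))" for x
    unfolding W_def by (simp add: power2_norm_eq_inner)
  have "(LINT x|lborel. (W x \<bullet> E x) * \<rho> x) = 0"
    using l2_inner_EL_zero_if_stationary[OF \<rho>_int stat W_meas W_le, of "(s0, t0)"] s0 t0
    unfolding l2_inner_def wint_def E_def by (simp add: mem_box_unit_sq)
  moreover have "integrable lborel (\<lambda>x. (W x \<bullet> E x) * \<rho> x)"
    using has_bochner_integral_l2_inner_EL[OF L2_dominated_bounded[OF \<rho>_int W_meas W_le] st0]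
    unfolding E_def by (simp add: has_bochner_integral_iff)
  moreover have "0 \<le> (W x \<bullet> E x) * \<rho> x" for x
    unfolding W_E using \<rho>_nonneg[of x] by (intro mult_nonneg_nonneg divide_nonneg_nonneg) simp_all
  ultimately have "AE x in lborel. (W x \<bullet> E x) * \<rho> x = 0"
    using integral_nonneg_eq_0_iff_AE[of lborel "\<lambda>x. (W x \<bullet> E x) * \<rho> x"] by simp
  then have "AE x in lborel. 0 < ennreal (\<rho> x) \<longrightarrow> EL_lhs \<rho> Ts Tt s0 t0 x = 0"
  proof (rule AE_mp, intro AE_I2 impI)
    fix x assume "(W x \<bullet> E x) * \<rho> x = 0" "0 < ennreal (\<rho> x)"
    then have "(norm (E x))\<^sup>2 / (1 + norm (E x)) = 0" unfolding W_E by simp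
    then have "E x = 0" using pos[of x] by simp
    then show "EL_lhs \<rho> Ts Tt s0 t0 x = 0" unfolding EL_lhs_eq_EL[OF s0 t0] E_def .
  qed
  then show ?thesis
    using AE_density[of "\<lambda>x. ennreal (\<rho> x)" lborel] \<rho>_measurable by simp
qed

end

theorem mainTheorem5:
  fixes \<rho>00 :: "'a::euclidean_space \<Rightarrow> real"
    and \<rho> :: "real \<Rightarrow> real \<Rightarrow> 'a \<Rightarrow> real"
    and T Ts Tt Tss Tst Tts Ttt :: "real \<Rightarrow> real \<Rightarrow> 'a \<Rightarrow> 'a"
  assumes dens_meas: "\<rho>00 \<in> borel_measurable lborel"
    and dens_nonneg: "\<And>x. \<rho>00 x \<ge> 0"
    and dens_int: "integrable lborel \<rho>00"
    and dens_one: "(LINT x|lborel. \<rho>00 x) = 1"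
    and bdry_meas: "\<And>r. r \<in> {0..1} \<Longrightarrow>
          \<rho> 0 r \<in> borel_measurable lborel \<and> \<rho> 1 r \<in> borel_measurable lborel \<and>
          \<rho> r 0 \<in> borel_measurable lborel \<and> \<rho> r 1 \<in> borel_measurable lborel"
    and bdry_nonneg: "\<And>r x. r \<in> {0..1} \<Longrightarrow>
          \<rho> 0 r x \<ge> 0 \<and> \<rho> 1 r x \<ge> 0 \<and> \<rho> r 0 x \<ge> 0 \<and> \<rho> r 1 x \<ge> 0"
    and T_C1: "C1_param T Ts Tt"
    and Ts_C1: "C1_param Ts Tss Tst"
    and Tt_C1: "C1_param Tt Tts Ttt"
    and T_dom: "L2_dominated \<rho>00 [T, Ts, Tt, Tss, Tst, Tts, Ttt]"
    and D_pos: "\<And>s t. s \<in> {0..1} \<Longrightarrow> t \<in> {0..1} \<Longrightarrow> Dfun \<rho>00 Ts Tt s t > 0"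
    and bc_s0: "\<And>t. t \<in> {0..1} \<Longrightarrow>
          distr (density lborel (\<lambda>x. ennreal (\<rho>00 x))) lborel (T 0 t) = density lborel (\<lambda>x. ennreal (\<rho> 0 t x))"
    and bc_s1: "\<And>t. t \<in> {0..1} \<Longrightarrow>
          distr (density lborel (\<lambda>x. ennreal (\<rho>00 x))) lborel (T 1 t) = density lborel (\<lambda>x. ennreal (\<rho> 1 t x))"
    and bc_t0: "\<And>s. s \<in> {0..1} \<Longrightarrow>
          distr (density lborel (\<lambda>x. ennreal (\<rho>00 x))) lborel (T s 0) = density lborel (\<lambda>x. ennreal (\<rho> s 0 x))"
    and bc_t1: "\<And>s. s \<in> {0..1} \<Longrightarrow>
          distr (density lborel (\<lambda>x. ennreal (\<rho>00 x))) lborel (T s 1) = density lborel (\<lambda>x. ennreal (\<rho> s 1 x))"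
  shows "stationary \<rho>00 Ts Tt \<longleftrightarrow>
         (\<forall>s\<in>{0<..<1}. \<forall>t\<in>{0<..<1}.
            AE x in density lborel (\<lambda>x. ennreal (\<rho>00 x)). EL_lhs \<rho>00 Ts Tt s t x = 0)"
proof -
  interpret EL_setting \<rho>00 Ts Tt Tss Tst Tts Ttt
  proof
    show "L2_dominated \<rho>00 [Ts, Tt, Tss, Tst, Tts, Ttt]"
      by (rule L2_dominated_subset[OF T_dom]) auto
  qed (fact dens_meas dens_nonneg Ts_C1 Tt_C1 D_pos)+
  show ?thesis
    using stationary_if_EL_vanishes EL_vanishes_if_stationary[OF dens_int] by blast
qed

end
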